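(* Let $F$ be a forest with connected components $F_1,\dots,F_p$, where each $F_i$ is a copy of the spider $S(2^{n_i})$ (with its own torso and leg labels). Let $\alpha:V(F)\to\mathbb{N}$ satisfy $\alpha|_{F_i}\in\mathcal{A}_{k_i}$ with $k_i\ge3$ for every $i$. For any choice of integers $1\le a_i\le k_i$, define $\beta:V(F)\to\mathbb{N}$ by $\beta|_{F_i}=\phi_{a_i}(\alpha|_{F_i})$ for each $i$. Then $X_F^\alpha+X_F^\beta\ge_{2s}0$.
   Context: $S(2^n)$: torso $v_0$, vertices $v_i,v'_i$ ($1\le i\le n$), edges $v_0v_i,v_iv'_i$. $\mathcal{A}_k$ (for $S(2^n)$): maps $\alpha$ with $\alpha(v_0)=1$, $\alpha(v_i)\le1$, $\alpha(v_i)+\alpha(v'_i)\le2$, and $\#\{j:\alpha(v_j)=1,\alpha(v'_j)=0\}=k$. For $\alpha\in\mathcal A_k$ with $\{j:\alpha(v_j)=1,\alpha(v'_j)=0\}=\{i_1<\dots<i_k\}$ and $S\subseteq\{1,\dots,k\}$, $\phi_S(\alpha)$ agrees with $\alpha$ except $\phi_S(\alpha)(v_{i_j})=2$ for $j\in S$ and $\phi_S(\alpha)(v_0)=0$; $\phi_a=\phi_{\{a\}}$. $X_G^\alpha=\sum_\kappa\prod_ix_i^{a_i}$ over maps $\kappa$ with $|\kappa(v)|=\alpha(v)$ (sets of positive integers), disjoint on edges, $a_i=\#\{v:i\in\kappa(v)\}$. $f\ge_{2s}0$ means $[s_\lambda]f\ge0$ for all partitions $\lambda$ with at most two parts. *)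

theory Defs
  imports Main
begin

datatype spv = Torso | Inner nat | Outer nat

definition spider_verts :: "nat \<Rightarrow> spv set" where
  "spider_verts n = {Torso} \<union> Inner ` {1..n} \<union> Outer ` {1..n}"

definition spider_adj :: "nat \<Rightarrow> spv \<Rightarrow> spv \<Rightarrow> bool" where
  "spider_adj n u v \<longleftrightarrow> (\<exists>j\<in>{1..n}.
      (u = Torso \<and> v = Inner j) \<or> (u = Inner j \<and> v = Torso) \<or>
      (u = Inner j \<and> v = Outer j) \<or> (u = Outer j \<and> v = Inner j))"

definition spJ :: "nat \<Rightarrow> (spv \<Rightarrow> nat) \<Rightarrow> nat set" where
  "spJ n \<alpha> = {j\<in>{1..n}. \<alpha> (Inner j) = 1 \<and> \<alpha> (Outer j) = 0}"

definition in_A :: "nat \<Rightarrow> nat \<Rightarrow> (spv \<Rightarrow> nat) \<Rightarrow> bool" where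
  "in_A n k \<alpha> \<longleftrightarrow> \<alpha> Torso = 1 \<and>
     (\<forall>j\<in>{1..n}. \<alpha> (Inner j) \<le> 1 \<and> \<alpha> (Inner j) + \<alpha> (Outer j) \<le> 2) \<and>
     card (spJ n \<alpha>) = k"

text \<open>phi_S: with spJ = {i_1 < ... < i_k}, set v_{i_j} to 2 for j in S and the torso to 0.
  Here i_j = (sorted_list_of_set (spJ n alpha)) ! (j-1).\<close>
definition phiS :: "nat \<Rightarrow> nat set \<Rightarrow> (spv \<Rightarrow> nat) \<Rightarrow> spv \<Rightarrow> nat" where
  "phiS n S \<alpha> u = (case u of
      Torso \<Rightarrow> 0
    | Inner j \<Rightarrow> (if j \<in> (\<lambda>t. sorted_list_of_set (spJ n \<alpha>) ! (t - 1)) ` (S \<inter> {1..card (spJ n \<alpha>)})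
                  then 2 else \<alpha> u)
    | Outer j \<Rightarrow> \<alpha> u)"

definition phi :: "nat \<Rightarrow> nat \<Rightarrow> (spv \<Rightarrow> nat) \<Rightarrow> spv \<Rightarrow> nat" where
  "phi n a \<alpha> = phiS n {a} \<alpha>"

definition forest_verts :: "nat \<Rightarrow> (nat \<Rightarrow> nat) \<Rightarrow> (nat \<times> spv) set" where
  "forest_verts p n = {(i, u). i < p \<and> u \<in> spider_verts (n i)}"

definition forest_adj :: "(nat \<Rightarrow> nat) \<Rightarrow> nat \<times> spv \<Rightarrow> nat \<times> spv \<Rightarrow> bool" where
  "forest_adj n x y \<longleftrightarrow> fst x = fst y \<and> spider_adj (n (fst x)) (snd x) (snd y)"

text \<open>A monomial x^e is given by an exponent function e (variables x_1, x_2, ...; index 0 unused).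
  The coefficient of x^e in X_G^alpha for the graph (V,E).\<close>
definition colourings :: "'v set \<Rightarrow> ('v \<Rightarrow> 'v \<Rightarrow> bool) \<Rightarrow> ('v \<Rightarrow> nat) \<Rightarrow> ('v \<Rightarrow> nat set) set" where
  "colourings V E \<alpha> = {\<kappa>.
      (\<forall>v\<in>V. finite (\<kappa> v) \<and> 0 \<notin> \<kappa> v \<and> card (\<kappa> v) = \<alpha> v) \<and>
      (\<forall>v. v \<notin> V \<longrightarrow> \<kappa> v = {}) \<and>
      (\<forall>u\<in>V. \<forall>v\<in>V. E u v \<longrightarrow> \<kappa> u \<inter> \<kappa> v = {})}"

definition Xcoef :: "'v set \<Rightarrow> ('v \<Rightarrow> 'v \<Rightarrow> bool) \<Rightarrow> ('v \<Rightarrow> nat) \<Rightarrow> (nat \<Rightarrow> nat) \<Rightarrow> int" where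
  "Xcoef V E \<alpha> e = int (card {\<kappa> \<in> colourings V E \<alpha>. \<forall>i. card {v\<in>V. i \<in> \<kappa> v} = e i})"

definition monomials :: "(nat \<Rightarrow> nat) set" where
  "monomials = {e. finite {i. e i \<noteq> 0} \<and> e 0 = 0}"

definition mdeg :: "(nat \<Rightarrow> nat) \<Rightarrow> nat" where
  "mdeg e = sum e {i. e i \<noteq> 0}"

definition is_partition :: "nat list \<Rightarrow> bool" where
  "is_partition la \<longleftrightarrow> sorted_wrt (\<ge>) la \<and> (\<forall>x\<in>set la. 0 < x)"

definition cells :: "nat list \<Rightarrow> (nat \<times> nat) set" where
  "cells la = {(r, c). r < length la \<and> c < la ! r}"

definition ssyt :: "nat list \<Rightarrow> (nat \<times> nat \<Rightarrow> nat) \<Rightarrow> bool" where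
  "ssyt la T \<longleftrightarrow>
     (\<forall>x\<in>cells la. 1 \<le> T x) \<and> (\<forall>x. x \<notin> cells la \<longrightarrow> T x = 0) \<and>
     (\<forall>r c. (r, c) \<in> cells la \<and> (r, Suc c) \<in> cells la \<longrightarrow> T (r, c) \<le> T (r, Suc c)) \<and>
     (\<forall>r c. (r, c) \<in> cells la \<and> (Suc r, c) \<in> cells la \<longrightarrow> T (r, c) < T (Suc r, c))"

definition kostka :: "nat list \<Rightarrow> (nat \<Rightarrow> nat) \<Rightarrow> nat" where
  "kostka la e = card {T. ssyt la T \<and> (\<forall>i. card {x\<in>cells la. T x = i} = e i)}"

definition schur_expansion :: "((nat \<Rightarrow> nat) \<Rightarrow> int) \<Rightarrow> (nat list \<Rightarrow> int) \<Rightarrow> bool" where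
  "schur_expansion f c \<longleftrightarrow>
     (\<forall>e\<in>monomials. f e =
        (\<Sum>\<mu>\<in>{\<mu>. is_partition \<mu> \<and> sum_list \<mu> = mdeg e}. c \<mu> * int (kostka \<mu> e)))"

text \<open>f >=_{2s} 0: f is Schur-expandable and [s_lambda] f >= 0 for all lambda with at most two parts.
  (The Schur expansion is unique, so this is the coefficient condition of the paper.)\<close>
definition ge_2s :: "((nat \<Rightarrow> nat) \<Rightarrow> int) \<Rightarrow> bool" where
  "ge_2s f \<longleftrightarrow> (\<exists>c. schur_expansion f c \<and>
      (\<forall>la. is_partition la \<and> length la \<le> 2 \<longrightarrow> 0 \<le> c la))"

end

theory Submission
  imports Defs "HOL-Computational_Algebra.Polynomial" "HOL-Combinatorics.Transposition" "HOL-Library.FuncSet"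
begin

text \<open>\<open>X\<^sub>F\<^sup>\<alpha>\<close> is symmetric, so its Schur expansion is obtained by inverting the unitriangular
  Kostka matrix (the Kostka numbers are symmetric by the Bender--Knuth involution); in particular
  the coefficient of \<open>s\<^sub>(\<^sub>x\<^sub>,\<^sub>y\<^sub>)\<close> is \<open>[x\<^sub>1^x x\<^sub>2^y] - [x\<^sub>1^(x+1) x\<^sub>2^(y-1)]\<close>.
  These two monomials only see colourings with colours \<open>1\<close> and \<open>2\<close>, which are encoded by a
  polynomial \<open>Q(t)\<close> counting the vertices of colour \<open>1\<close>. \<open>Q\<close> factors over components and legs:
  a spider with \<open>\<alpha> \<in> \<A>\<^sub>k\<close> contributes \<open>P t (1 + t^(k-1))\<close> and one with \<open>\<phi>\<^sub>a(\<alpha>)\<close> contributes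
  \<open>C P t (1 + t)^(k-1)\<close>, with the same symmetric unimodal \<open>P\<close> and \<open>C \<ge> 1\<close>. Writing
  \<open>1 + t^n = h - b\<close> and \<open>(1 + t)^n = h + b + r\<close> with \<open>h = 1 + \<dots> + t^n\<close>,
  \<open>b = t + \<dots> + t^(n-1)\<close> and \<open>r\<close> symmetric unimodal, \<open>Q\<^sub>\<alpha> + Q\<^sub>\<beta>\<close> becomes a nonnegative
  combination of products of symmetric unimodal polynomials with a common centre, hence is
  symmetric unimodal itself; past its centre its coefficients decrease, so the two-row Schur
  coefficients are nonnegative.\<close>

section \<open>Symmetric unimodal polynomials\<close>

definition sym_unimodal :: "nat \<Rightarrow> int poly \<Rightarrow> bool" where
  "sym_unimodal D q \<longleftrightarrow> (\<forall>j. 0 \<le> coeff q j) \<and> (\<forall>j>D. coeff q j = 0) \<and>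
     (\<forall>j\<le>D. coeff q (D - j) = coeff q j) \<and> (\<forall>j. 2 * j + 2 \<le> D \<longrightarrow> coeff q j \<le> coeff q (Suc j))"

lemma sym_unimodal_0: "sym_unimodal D 0"
  by (simp add: sym_unimodal_def)

lemma sym_unimodal_1: "sym_unimodal 0 1"
  by (simp add: sym_unimodal_def coeff_1)

lemma sym_unimodal_add: "sym_unimodal D p \<Longrightarrow> sym_unimodal D q \<Longrightarrow> sym_unimodal D (p + q)"
  unfolding sym_unimodal_def by (auto intro: add_mono)

lemma sym_unimodal_smult: "0 \<le> c \<Longrightarrow> sym_unimodal D p \<Longrightarrow> sym_unimodal D (smult c p)"
  unfolding sym_unimodal_def by (auto intro: mult_left_mono)

lemma sym_unimodal_sum:
  "finite A \<Longrightarrow> (\<And>i. i \<in> A \<Longrightarrow> sym_unimodal D (f i)) \<Longrightarrow> sym_unimodal D (\<Sum>i\<in>A. f i)"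
  by (induction A rule: finite_induct) (auto intro: sym_unimodal_add sym_unimodal_0)

lemma sym_unimodal_monom_mult:
  assumes "sym_unimodal D q"
  shows "sym_unimodal (D + 2 * j) (monom 1 j * q)"
proof -
  have nonneg: "\<And>t. 0 \<le> coeff q t" and vanish: "\<And>t. D < t \<Longrightarrow> coeff q t = 0"
    and palin: "\<And>t. t \<le> D \<Longrightarrow> coeff q (D - t) = coeff q t"
    and incr: "\<And>t. 2 * t + 2 \<le> D \<Longrightarrow> coeff q t \<le> coeff q (Suc t)"
    using assms by (auto simp: sym_unimodal_def)
  show ?thesis
    unfolding sym_unimodal_def coeff_monom_mult
  proof (intro conjI allI impI)
    fix t assume t: "t \<le> D + 2 * j"
    show "(if D + 2 * j - t < j then 0 else 1 * coeff q (D + 2 * j - t - j)) =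
          (if t < j then 0 else 1 * coeff q (t - j))"
    proof (cases "j \<le> t \<and> t \<le> D + j")
      case True
      then have "D + 2 * j - t - j = D - (t - j)" by auto
      with True palin[of "t - j"] show ?thesis by auto
    qed (use vanish[of "D + 2 * j - t - j"] vanish[of "t - j"] t in auto)
  next
    fix t assume "2 * t + 2 \<le> D + 2 * j"
    then show "(if t < j then 0 else 1 * coeff q (t - j)) \<le> (if Suc t < j then 0 else 1 * coeff q (Suc t - j))"
      using nonneg incr[of "t - j"] by (auto simp: Suc_diff_le)
  qed (use nonneg vanish in auto)
qed

definition geom_poly :: "nat \<Rightarrow> int poly" where
  "geom_poly m = (\<Sum>t\<le>m. monom 1 t)"

lemma coeff_geom_poly: "coeff (geom_poly m) t = (if t \<le> m then 1 else 0)"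
  by (simp add: geom_poly_def coeff_sum coeff_monom)

lemma coeff_geom_poly_mult: "coeff (geom_poly m * geom_poly n) t = int (Suc (min t m) - (t - n))"
proof -
  have "coeff (geom_poly m * geom_poly n) t = (\<Sum>i\<le>t. if i \<le> m \<and> t - i \<le> n then 1 else 0)"
    by (auto simp: coeff_mult coeff_geom_poly intro!: sum.cong)
  also have "\<dots> = int (card ({..t} \<inter> {i. i \<le> m \<and> t - i \<le> n}))"
    by (simp add: sum.If_cases)
  also have "{..t} \<inter> {i. i \<le> m \<and> t - i \<le> n} = {t - n..min t m}"
    by auto
  finally show ?thesis
    by simp
qed

lemma sym_unimodal_geom_poly_mult: "sym_unimodal (m + n) (geom_poly m * geom_poly n)"
  unfolding sym_unimodal_def coeff_geom_poly_mult
proof (intro conjI allI impI)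
  fix j
  show "m + n < (j::nat) \<Longrightarrow> int (Suc (min j m) - (j - n)) = 0"
    unfolding min_def by (simp split: if_splits; arith)
  show "(j::nat) \<le> m + n \<Longrightarrow> int (Suc (min (m + n - j) m) - (m + n - j - n)) = int (Suc (min j m) - (j - n))"
    unfolding min_def by (simp split: if_splits; arith)
  show "2 * j + 2 \<le> m + (n::nat) \<Longrightarrow> int (Suc (min j m) - (j - n)) \<le> int (Suc (min (Suc j) m) - (Suc j - n))"
    unfolding min_def by (simp split: if_splits; arith)
qed simp

lemma sym_unimodal_geom_poly: "sym_unimodal m (geom_poly m)"
  using sym_unimodal_geom_poly_mult[of m 0] by (simp add: geom_poly_def)

definition coeff_increment :: "int poly \<Rightarrow> nat \<Rightarrow> int" where
  "coeff_increment q j = coeff q j - (if j = 0 then 0 else coeff q (j - 1))"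

lemma sum_coeff_increment: "(\<Sum>j\<le>N. coeff_increment q j) = coeff q N"
  by (induction N) (auto simp: coeff_increment_def)

lemma coeff_increment_nonneg:
  assumes "sym_unimodal D q" and "j \<le> D div 2"
  shows "0 \<le> coeff_increment q j"
proof (cases j)
  case (Suc i)
  then have "2 * i + 2 \<le> D"
    using assms(2) by linarith
  then show ?thesis
    using assms(1) Suc by (simp add: sym_unimodal_def coeff_increment_def)
qed (use assms in \<open>simp add: sym_unimodal_def coeff_increment_def\<close>)

lemma sym_unimodal_decomp:
  assumes "sym_unimodal D q"
  shows "q = (\<Sum>j\<le>D div 2. smult (coeff_increment q j) (monom 1 j * geom_poly (D - 2 * j)))"
proof (rule poly_eqI)
  fix t
  have vanish: "\<And>t. D < t \<Longrightarrow> coeff q t = 0"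
    and palin: "\<And>t. t \<le> D \<Longrightarrow> coeff q (D - t) = coeff q t"
    using assms by (auto simp: sym_unimodal_def)
  have "coeff (\<Sum>j\<le>D div 2. smult (coeff_increment q j) (monom 1 j * geom_poly (D - 2 * j))) t =
        (\<Sum>j\<le>D div 2. if j \<le> t \<and> t \<le> D - j then coeff_increment q j else 0)"
    by (auto simp: coeff_sum coeff_monom_mult coeff_geom_poly intro!: sum.cong)
  also have "\<dots> = coeff q t"
  proof (cases "t \<le> D")
    case True
    define N where "N = min t (D - t)"
    have "{j \<in> {..D div 2}. j \<le> t \<and> t \<le> D - j} = {..N}"
      using True by (auto simp: N_def)
    then have "(\<Sum>j\<le>D div 2. if j \<le> t \<and> t \<le> D - j then coeff_increment q j else 0) =
               (\<Sum>j\<le>N. coeff_increment q j)"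
      by (simp add: sum.If_cases Int_def)
    also have "\<dots> = coeff q N"
      by (rule sum_coeff_increment)
    also have "\<dots> = coeff q t"
      using palin[of t] True by (auto simp: N_def min_def)
    finally show ?thesis .
  qed (use vanish[of t] in \<open>auto intro!: sum.neutral\<close>)
  finally show "coeff q t = coeff (\<Sum>j\<le>D div 2. smult (coeff_increment q j) (monom 1 j * geom_poly (D - 2 * j))) t"
    by simp
qed

lemma sym_unimodal_block_mult:
  assumes "i \<le> D1 div 2" and "j \<le> D2 div 2"
  shows "sym_unimodal (D1 + D2) ((monom 1 i * geom_poly (D1 - 2 * i)) * (monom 1 j * geom_poly (D2 - 2 * j)))"
proof -
  have "sym_unimodal ((D1 - 2 * i) + (D2 - 2 * j) + 2 * (i + j))
          (monom 1 (i + j) * (geom_poly (D1 - 2 * i) * geom_poly (D2 - 2 * j)))"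
    by (rule sym_unimodal_monom_mult[OF sym_unimodal_geom_poly_mult])
  moreover have "(D1 - 2 * i) + (D2 - 2 * j) + 2 * (i + j) = D1 + D2"
    using assms by auto
  moreover have "monom (1::int) (i + j) = monom 1 i * monom 1 j"
    by (simp add: mult_monom)
  ultimately show ?thesis
    by (simp add: ac_simps)
qed

lemma sym_unimodal_mult:
  assumes p: "sym_unimodal D1 p" and q: "sym_unimodal D2 q"
  shows "sym_unimodal (D1 + D2) (p * q)"
proof -
  have "p * q = (\<Sum>i\<le>D1 div 2. smult (coeff_increment p i) (monom 1 i * geom_poly (D1 - 2 * i))) *
                (\<Sum>j\<le>D2 div 2. smult (coeff_increment q j) (monom 1 j * geom_poly (D2 - 2 * j)))"
    by (intro arg_cong2[where f = times] sym_unimodal_decomp p q)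
  also have "\<dots> = (\<Sum>i\<le>D1 div 2. \<Sum>j\<le>D2 div 2.
                   smult (coeff_increment p i * coeff_increment q j)
                     ((monom 1 i * geom_poly (D1 - 2 * i)) * (monom 1 j * geom_poly (D2 - 2 * j))))"
    by (simp add: sum_product mult_smult_left mult_smult_right mult.commute)
  also have "sym_unimodal (D1 + D2) \<dots>"
    using coeff_increment_nonneg[OF p] coeff_increment_nonneg[OF q]
    by (intro sym_unimodal_sum sym_unimodal_smult sym_unimodal_block_mult) auto
  finally show ?thesis .
qed

lemma sym_unimodal_prod:
  "finite A \<Longrightarrow> (\<And>i. i \<in> A \<Longrightarrow> sym_unimodal (d i) (f i)) \<Longrightarrow>
     sym_unimodal (\<Sum>i\<in>A. d i) (\<Prod>i\<in>A. f i)"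
  by (induction A rule: finite_induct) (simp_all add: sym_unimodal_1 sym_unimodal_mult)

lemma sym_unimodal_x: "sym_unimodal 2 (monom 1 1)"
  using sym_unimodal_monom_mult[OF sym_unimodal_1, of 1] by (simp add: numeral_2_eq_2)

lemma sym_unimodal_one_plus_x: "sym_unimodal 1 [:1, 1:]"
proof -
  have "geom_poly 1 = [:1, 1:]"
    by (rule poly_eqI) (simp add: coeff_geom_poly coeff_pCons split: nat.split)
  then show ?thesis
    using sym_unimodal_geom_poly[of 1] by simp
qed

lemma sym_unimodal_prod_plus_minus:
  assumes "finite A" and "\<And>i. i \<in> A \<Longrightarrow> sym_unimodal (d i) (h i) \<and> sym_unimodal (d i) (b i)"
  shows "sym_unimodal (\<Sum>i\<in>A. d i) ((\<Prod>i\<in>A. h i + b i) + (\<Prod>i\<in>A. h i - b i)) \<and>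
         sym_unimodal (\<Sum>i\<in>A. d i) ((\<Prod>i\<in>A. h i + b i) - (\<Prod>i\<in>A. h i - b i))"
  using assms
proof (induction A rule: finite_induct)
  case empty
  show ?case
    using sym_unimodal_add[OF sym_unimodal_1 sym_unimodal_1] by (simp add: sym_unimodal_0)
next
  case (insert x A)
  define P where "P = (\<Prod>i\<in>A. h i + b i)"
  define M where "M = (\<Prod>i\<in>A. h i - b i)"
  have IH: "sym_unimodal (\<Sum>i\<in>A. d i) (P + M)" "sym_unimodal (\<Sum>i\<in>A. d i) (P - M)"
    using insert by (auto simp: P_def M_def)
  have hb: "sym_unimodal (d x) (h x)" "sym_unimodal (d x) (b x)"
    using insert.prems by auto
  have "(h x + b x) * P + (h x - b x) * M = h x * (P + M) + b x * (P - M)"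
       "(h x + b x) * P - (h x - b x) * M = h x * (P - M) + b x * (P + M)"
    by (simp_all add: algebra_simps)
  then show ?case
    using insert.hyps by (simp add: P_def[symmetric] M_def[symmetric] sym_unimodal_add sym_unimodal_mult hb IH)
qed

lemma sym_unimodal_prod_add_diff:
  assumes "finite A" and "\<And>i. i \<in> A \<Longrightarrow> sym_unimodal (d i) (a i) \<and> sym_unimodal (d i) (r i)"
  shows "sym_unimodal (\<Sum>i\<in>A. d i) ((\<Prod>i\<in>A. a i + r i) - (\<Prod>i\<in>A. a i))"
  using assms
proof (induction A rule: finite_induct)
  case (insert x A)
  define X where "X = (\<Prod>i\<in>A. a i + r i)"
  define Y where "Y = (\<Prod>i\<in>A. a i)"
  have IH: "sym_unimodal (\<Sum>i\<in>A. d i) (X - Y)"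
    using insert by (simp add: X_def Y_def)
  have Y: "sym_unimodal (\<Sum>i\<in>A. d i) Y"
    unfolding Y_def using insert.prems by (intro sym_unimodal_prod insert.hyps) auto
  have ar: "sym_unimodal (d x) (a x + r x)" "sym_unimodal (d x) (r x)"
    using insert.prems by (auto intro: sym_unimodal_add)
  have "(a x + r x) * X - a x * Y = (a x + r x) * (X - Y) + r x * Y"
    by (simp add: algebra_simps)
  then show ?case
    using insert.hyps by (simp add: X_def[symmetric] Y_def[symmetric] sym_unimodal_add sym_unimodal_mult ar IH Y)
qed (simp add: sym_unimodal_0)

lemma coeff_one_plus_x_power: "coeff ([:1, 1:] ^ n) j = int (n choose j)"
proof (induction n arbitrary: j)
  case (Suc n)
  then show ?case
    by (cases j) simp_all
qed (simp add: coeff_1)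

lemma binomial_ge_2: "0 < j \<Longrightarrow> j < n \<Longrightarrow> 2 \<le> n choose j"
proof -
  assume "0 < j" "j < n"
  then obtain m i where m: "n = Suc m" and i: "j = Suc i"
    by (cases n; cases j) auto
  have "0 < m choose i" and "0 < m choose Suc i"
    using \<open>j < n\<close> m i by (auto intro: zero_less_binomial)
  then show ?thesis
    unfolding m i by (simp only: binomial_Suc_Suc)
qed

definition interior_poly :: "nat \<Rightarrow> int poly" where
  "interior_poly n = monom 1 1 * geom_poly (n - 2)"

definition binomial_remainder :: "nat \<Rightarrow> int poly" where
  "binomial_remainder n = [:1, 1:] ^ n - geom_poly n - interior_poly n"

lemma geom_poly_minus_interior_poly: "2 \<le> n \<Longrightarrow> geom_poly n - interior_poly n = 1 + monom 1 n"
  by (rule poly_eqI) (auto simp: interior_poly_def coeff_geom_poly coeff_monom_mult coeff_monom coeff_1)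

lemma sym_unimodal_interior_poly:
  assumes "2 \<le> n"
  shows "sym_unimodal n (interior_poly n)"
proof -
  have "n - 2 + 2 * 1 = n"
    using assms by simp
  then show ?thesis
    using sym_unimodal_monom_mult[OF sym_unimodal_geom_poly, of "n - 2" 1]
    by (simp only: interior_poly_def)
qed

lemma coeff_binomial_remainder:
  "coeff (binomial_remainder n) j =
     int (n choose j) - (if j \<le> n then 1 else 0) - (if 1 \<le> j \<and> j - 1 \<le> n - 2 then 1 else 0)"
  by (simp add: binomial_remainder_def interior_poly_def coeff_one_plus_x_power coeff_geom_poly
      coeff_monom_mult)

lemma sym_unimodal_binomial_remainder:
  assumes "2 \<le> n"
  shows "sym_unimodal n (binomial_remainder n)"
  unfolding sym_unimodal_def coeff_binomial_remainder
proof (intro conjI allI impI)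
  fix j
  show "0 \<le> int (n choose j) - (if j \<le> n then 1 else 0) - (if 1 \<le> j \<and> j - 1 \<le> n - 2 then 1 else 0)"
    using binomial_ge_2[of j n] assms by (cases "0 < j \<and> j < n"; cases "j = 0") auto
next
  fix j assume "n < j"
  moreover from this have "\<not> j - 1 \<le> n - 2"
    using assms by arith
  ultimately show "int (n choose j) - (if j \<le> n then 1 else 0) - (if 1 \<le> j \<and> j - 1 \<le> n - 2 then 1 else 0) = 0"
    by simp
next
  fix j assume j: "j \<le> n"
  then have "n choose (n - j) = n choose j"
    by (simp add: binomial_symmetric[symmetric])
  then show "int (n choose (n - j)) - (if n - j \<le> n then 1 else 0) - (if 1 \<le> n - j \<and> n - j - 1 \<le> n - 2 then 1 else 0) =
      int (n choose j) - (if j \<le> n then 1 else 0) - (if 1 \<le> j \<and> j - 1 \<le> n - 2 then 1 else 0)"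
    using j assms by auto
next
  fix j assume j: "2 * j + 2 \<le> n"
  then have "n choose j \<le> n choose Suc j"
    by (intro binomial_mono) auto
  then show "int (n choose j) - (if j \<le> n then 1 else 0) - (if 1 \<le> j \<and> j - 1 \<le> n - 2 then 1 else 0)
      \<le> int (n choose Suc j) - (if Suc j \<le> n then 1 else 0) - (if 1 \<le> Suc j \<and> Suc j - 1 \<le> n - 2 then 1 else 0)"
    using j by (cases "j = 0") auto
qed

text \<open>With \<open>h = 1 + \<dots> + x^n\<close>, \<open>b = x + \<dots> + x^(n-1)\<close> and the remainder \<open>r\<close>, all symmetric
  unimodal of degree \<open>n\<close>, we have \<open>1 + x^n = h - b\<close> and \<open>(1 + x)^n = (h + b) + r\<close>.\<close>

lemma sym_unimodal_spider_combination:
  assumes A: "finite A" and n: "\<And>i. i \<in> A \<Longrightarrow> 2 \<le> n i" and C: "1 \<le> C"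
  shows "sym_unimodal (\<Sum>i\<in>A. n i + 2)
           ((\<Prod>i\<in>A. monom 1 1 * (1 + monom 1 (n i))) + smult C (\<Prod>i\<in>A. monom 1 1 * [:1, 1:] ^ n i))"
proof -
  define h where "h i = geom_poly (n i)" for i
  define b where "b i = interior_poly (n i)" for i
  define r where "r i = binomial_remainder (n i)" for i
  define S where "S = (\<Sum>i\<in>A. n i)"
  have hbr: "sym_unimodal (n i) (h i)" "sym_unimodal (n i) (b i)" "sym_unimodal (n i) (r i)"
    if "i \<in> A" for i
    using n[OF that] by (simp_all add: h_def b_def r_def sym_unimodal_geom_poly
        sym_unimodal_interior_poly sym_unimodal_binomial_remainder)
  have minus: "1 + monom 1 (n i) = h i - b i" if "i \<in> A" for i
    using geom_poly_minus_interior_poly[OF n[OF that]] by (simp add: h_def b_def)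
  have plus: "[:1, 1:] ^ n i = (h i + b i) + r i" for i
    by (simp add: h_def b_def r_def binomial_remainder_def)
  define P where "P = (\<Prod>i\<in>A. h i + b i)"
  define M where "M = (\<Prod>i\<in>A. h i - b i)"
  define R where "R = (\<Prod>i\<in>A. (h i + b i) + r i)"
  have "(\<Prod>i\<in>A. monom 1 1 * (1 + monom 1 (n i))) + smult C (\<Prod>i\<in>A. monom 1 1 * [:1, 1:] ^ n i) =
        monom 1 (card A) * M + smult C (monom 1 (card A) * R)"
    unfolding M_def R_def by (simp add: minus plus prod.distrib monom_power del: pCons_one cong: prod.cong)
  also have "\<dots> = monom 1 (card A) * ((P + M) + (R - P) + smult (C - 1) R)"
    by (simp add: algebra_simps smult_diff_left)
  finally have eq: "(\<Prod>i\<in>A. monom 1 1 * (1 + monom 1 (n i))) + smult C (\<Prod>i\<in>A. monom 1 1 * [:1, 1:] ^ n i) =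
        monom 1 (card A) * ((P + M) + (R - P) + smult (C - 1) R)" .
  have "sym_unimodal S ((P + M) + (R - P) + smult (C - 1) R)"
  proof (rule sym_unimodal_add[OF sym_unimodal_add])
    show "sym_unimodal S (P + M)"
      unfolding S_def P_def M_def using sym_unimodal_prod_plus_minus[OF A] hbr by blast
    show "sym_unimodal S (R - P)"
      unfolding S_def R_def P_def using hbr by (intro sym_unimodal_prod_add_diff A) (auto intro: sym_unimodal_add)
    show "sym_unimodal S (smult (C - 1) R)"
      unfolding S_def R_def using C hbr by (intro sym_unimodal_smult sym_unimodal_prod A) (auto intro: sym_unimodal_add)
  qed
  then have "sym_unimodal (S + 2 * card A)
      ((\<Prod>i\<in>A. monom 1 1 * (1 + monom 1 (n i))) + smult C (\<Prod>i\<in>A. monom 1 1 * [:1, 1:] ^ n i))"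
    unfolding eq by (rule sym_unimodal_monom_mult)
  moreover have "(\<Sum>i\<in>A. n i + 2) = S + 2 * card A"
    by (simp only: S_def sum.distrib) simp
  ultimately show ?thesis
    by simp
qed

section \<open>Semistandard tableaux and Kostka numbers\<close>

definition row_len :: "nat list \<Rightarrow> nat \<Rightarrow> nat" where
  "row_len la r = (if r < length la then la ! r else 0)"

lemma mem_cells_iff: "(r, c) \<in> cells la \<longleftrightarrow> c < row_len la r"
  by (auto simp: cells_def row_len_def)

lemma finite_cells: "finite (cells la)"
proof -
  have "cells la = Sigma {..<length la} (\<lambda>r. {..<row_len la r})"
    by (auto simp: cells_def row_len_def)
  then show ?thesis
    by simp
qed

lemma row_len_antimono:
  assumes "is_partition la" and "r \<le> r'"
  shows "row_len la r' \<le> row_len la r"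
proof (cases "r < r' \<and> r' < length la")
  case True
  then have "la ! r' \<le> la ! r"
    using assms(1) unfolding is_partition_def by (metis sorted_wrt_nth_less)
  then show ?thesis
    using True by (simp add: row_len_def)
qed (use assms(2) in \<open>auto simp: row_len_def\<close>)

lemma row_len_pos_iff: "is_partition la \<Longrightarrow> 0 < row_len la r \<longleftrightarrow> r < length la"
  by (auto simp: row_len_def is_partition_def)

lemma card_cells_filter:
  "card {x \<in> cells la. P x} = (\<Sum>r<length la. card {c. c < row_len la r \<and> P (r, c)})"
proof -
  have "{x \<in> cells la. P x} = Sigma {..<length la} (\<lambda>r. {c. c < row_len la r \<and> P (r, c)})"
    by (auto simp: cells_def row_len_def)
  then show ?thesis
    by (simp add: card_SigmaI)
qed

lemma card_row_filter_le: "card {c. c < row_len la r \<and> P c} \<le> row_len la r"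
  using card_mono[of "{..<row_len la r}" "{c. c < row_len la r \<and> P c}"] by auto

lemma ssyt_entry_pos: "ssyt la T \<Longrightarrow> c < row_len la r \<Longrightarrow> 1 \<le> T (r, c)"
  by (simp add: ssyt_def mem_cells_iff)

lemma ssyt_outside: "ssyt la T \<Longrightarrow> \<not> c < row_len la r \<Longrightarrow> T (r, c) = 0"
  by (simp add: ssyt_def mem_cells_iff)

lemma ssyt_row_mono:
  assumes "ssyt la T" and "c \<le> c'" and "c' < row_len la r"
  shows "T (r, c) \<le> T (r, c')"
  using assms(2,3)
proof (induction c' rule: dec_induct)
  case (step m)
  then have "T (r, m) \<le> T (r, Suc m)"
    using assms(1) by (simp add: ssyt_def mem_cells_iff)
  with step show ?case
    by simp
qed simp

lemma ssyt_col_strict: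
  assumes "ssyt la T" and "is_partition la" and "c < row_len la (Suc r)"
  shows "T (r, c) < T (Suc r, c)"
proof -
  have "c < row_len la r"
    using row_len_antimono[OF assms(2), of r "Suc r"] assms(3) by simp
  with assms show ?thesis
    by (simp add: ssyt_def mem_cells_iff)
qed

lemma ssyt_entry_ge_row:
  assumes "ssyt la T" and "is_partition la"
  shows "c < row_len la r \<Longrightarrow> Suc r \<le> T (r, c)"
proof (induction r)
  case (Suc r)
  have "c < row_len la r"
    using row_len_antimono[OF assms(2), of r "Suc r"] Suc.prems by simp
  then show ?case
    using Suc.IH ssyt_col_strict[OF assms Suc.prems] by simp
qed (use ssyt_entry_pos[OF assms(1)] in simp)

lemma down_closed_eq_lessThan:
  fixes S :: "nat set"
  assumes "finite S" and "\<And>x y. x \<in> S \<Longrightarrow> y \<le> x \<Longrightarrow> y \<in> S"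
  shows "S = {..<card S}"
proof -
  have "\<exists>k. k \<notin> S"
    using assms(1) by (meson ex_new_if_finite infinite_UNIV_nat)
  define k where "k = (LEAST k. k \<notin> S)"
  have "k \<notin> S"
    unfolding k_def using \<open>\<exists>k. k \<notin> S\<close> by (rule LeastI_ex)
  have "S = {..<k}"
  proof
    show "S \<subseteq> {..<k}"
      using assms(2)[of _ k] \<open>k \<notin> S\<close> not_less by blast
    show "{..<k} \<subseteq> S"
      unfolding k_def using not_less_Least by auto
  qed
  then show ?thesis
    by simp
qed

lemma ssyt_row_prefix_iff:
  assumes "ssyt la T" and "\<And>y y'. P y \<Longrightarrow> y' \<le> y \<Longrightarrow> P y'" and "c < row_len la r"
  shows "P (T (r, c)) \<longleftrightarrow> c < card {c. c < row_len la r \<and> P (T (r, c))}"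
proof -
  have "{c. c < row_len la r \<and> P (T (r, c))} = {..<card {c. c < row_len la r \<and> P (T (r, c))}}"
    by (rule down_closed_eq_lessThan) (auto intro: assms(2) ssyt_row_mono[OF assms(1)])
  then show ?thesis
    using assms(3) by blast
qed

definition tableaux :: "nat list \<Rightarrow> (nat \<Rightarrow> nat) \<Rightarrow> (nat \<times> nat \<Rightarrow> nat) set" where
  "tableaux la e = {T. ssyt la T \<and> (\<forall>v. card {x \<in> cells la. T x = v} = e v)}"

lemma kostka_eq_card_tableaux: "kostka la e = card (tableaux la e)"
  by (simp add: kostka_def tableaux_def)

subsection \<open>The Bender--Knuth involution\<close>

text \<open>In row \<open>r\<close> of a tableau the entries \<open>i\<close> occupy the columns \<open>[cnt_lt, cnt_le)\<close> and the
  entries \<open>i + 1\<close> the columns \<open>[cnt_le, cnt_le_Suc)\<close>. The entries in the columns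
  \<open>[free_lo, free_hi)\<close> are free: no \<open>i + 1\<close> lies below them and no \<open>i\<close> above them. The
  involution \<open>bk\<close> exchanges the numbers of free \<open>i\<close>'s and free \<open>i + 1\<close>'s in every row.\<close>

locale bender_knuth =
  fixes la :: "nat list" and i :: nat
  assumes partition: "is_partition la" and pos: "1 \<le> i"
begin

definition "cnt_lt T r = card {c. c < row_len la r \<and> T (r, c) < i}"
definition "cnt_le T r = card {c. c < row_len la r \<and> T (r, c) \<le> i}"
definition "cnt_le_Suc T r = card {c. c < row_len la r \<and> T (r, c) \<le> Suc i}"
definition "free_lo T r = max (cnt_lt T r) (cnt_le_Suc T (Suc r))"
definition "free_hi T r = (if r = 0 then cnt_le_Suc T 0 else min (cnt_le_Suc T r) (cnt_lt T (r - 1)))"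
definition "bk_cut T r = free_lo T r + free_hi T r - cnt_le T r"

definition "bk T = (\<lambda>(r, c). if T (r, c) = i \<or> T (r, c) = Suc i then (if c < bk_cut T r then i else Suc i)
                             else T (r, c))"

lemma bk_apply:
  "bk T (r, c) = (if T (r, c) = i \<or> T (r, c) = Suc i then (if c < bk_cut T r then i else Suc i) else T (r, c))"
  by (simp add: bk_def)

context
  fixes T assumes T: "ssyt la T"
begin

lemma cnt_lt_iff: "c < row_len la r \<Longrightarrow> T (r, c) < i \<longleftrightarrow> c < cnt_lt T r"
  unfolding cnt_lt_def by (rule ssyt_row_prefix_iff[OF T]) auto

lemma cnt_le_iff: "c < row_len la r \<Longrightarrow> T (r, c) \<le> i \<longleftrightarrow> c < cnt_le T r"
  unfolding cnt_le_def by (rule ssyt_row_prefix_iff[OF T]) auto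

lemma cnt_le_Suc_iff: "c < row_len la r \<Longrightarrow> T (r, c) \<le> Suc i \<longleftrightarrow> c < cnt_le_Suc T r"
  unfolding cnt_le_Suc_def by (rule ssyt_row_prefix_iff[OF T]) auto

lemma cnt_lt_le_cnt_le: "cnt_lt T r \<le> cnt_le T r"
  unfolding cnt_lt_def cnt_le_def by (rule card_mono) auto

lemma cnt_le_le_cnt_le_Suc: "cnt_le T r \<le> cnt_le_Suc T r"
  unfolding cnt_le_Suc_def cnt_le_def by (rule card_mono) auto

lemma cnt_le_Suc_le_row_len: "cnt_le_Suc T r \<le> row_len la r"
  unfolding cnt_le_Suc_def by (rule card_row_filter_le)

lemma cnt_le_Suc_next_row: "cnt_le_Suc T (Suc r) \<le> cnt_le T r"
proof -
  have "c < cnt_le T r" if c: "c < cnt_le_Suc T (Suc r)" for c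
  proof -
    have c1: "c < row_len la (Suc r)"
      using c cnt_le_Suc_le_row_len[of "Suc r"] by simp
    have "T (r, c) < T (Suc r, c)" and "T (Suc r, c) \<le> Suc i"
      using ssyt_col_strict[OF T partition c1] cnt_le_Suc_iff[OF c1] c by auto
    moreover have "c < row_len la r"
      using row_len_antimono[OF partition, of r "Suc r"] c1 by simp
    ultimately show ?thesis
      using cnt_le_iff[of c r] by linarith
  qed
  then show ?thesis
    by (meson not_le order_less_irrefl)
qed

lemma cnt_le_next_row: "cnt_le T (Suc r) \<le> cnt_lt T r"
proof -
  have "c < cnt_lt T r" if c: "c < cnt_le T (Suc r)" for c
  proof -
    have c1: "c < row_len la (Suc r)"
      using c cnt_le_le_cnt_le_Suc[of "Suc r"] cnt_le_Suc_le_row_len[of "Suc r"] by simp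
    have "T (r, c) < T (Suc r, c)" and "T (Suc r, c) \<le> i"
      using ssyt_col_strict[OF T partition c1] cnt_le_iff[OF c1] c by auto
    moreover have "c < row_len la r"
      using row_len_antimono[OF partition, of r "Suc r"] c1 by simp
    ultimately show ?thesis
      using cnt_lt_iff[of c r] by linarith
  qed
  then show ?thesis
    by (meson not_le order_less_irrefl)
qed

lemma free_lo_le_cnt_le: "free_lo T r \<le> cnt_le T r"
  unfolding free_lo_def using cnt_lt_le_cnt_le cnt_le_Suc_next_row by simp

lemma cnt_le_le_free_hi: "cnt_le T r \<le> free_hi T r"
  unfolding free_hi_def using cnt_le_le_cnt_le_Suc cnt_le_next_row[of "r - 1"] by (cases r) auto

lemma free_hi_le_cnt_le_Suc: "free_hi T r \<le> cnt_le_Suc T r"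
  unfolding free_hi_def by auto

lemma cnt_lt_le_free_lo: "cnt_lt T r \<le> free_lo T r"
  unfolding free_lo_def by auto

lemma free_lo_le_bk_cut: "free_lo T r \<le> bk_cut T r"
  unfolding bk_cut_def using cnt_le_le_free_hi[of r] by linarith

lemma bk_cut_le_free_hi: "bk_cut T r \<le> free_hi T r"
  unfolding bk_cut_def using free_lo_le_cnt_le[of r] by linarith

lemma bk_cut_minus_cnt_lt: "bk_cut T r - cnt_lt T r = (free_lo T r - cnt_lt T r) + (free_hi T r - cnt_le T r)"
  using cnt_lt_le_free_lo[of r] free_lo_le_cnt_le[of r] cnt_le_le_free_hi[of r] unfolding bk_cut_def by linarith

lemma cnt_le_minus_cnt_lt: "cnt_le T r - cnt_lt T r = (free_lo T r - cnt_lt T r) + (free_hi T r - bk_cut T r)"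
  using cnt_lt_le_free_lo[of r] free_lo_le_cnt_le[of r] cnt_le_le_free_hi[of r] unfolding bk_cut_def by linarith

lemma cnt_le_Suc_minus_cnt_le: "cnt_le_Suc T r - cnt_le T r = (cnt_le_Suc T r - free_hi T r) + (free_hi T r - cnt_le T r)"
  using free_hi_le_cnt_le_Suc[of r] cnt_le_le_free_hi[of r] by linarith

lemma cnt_le_Suc_minus_bk_cut: "cnt_le_Suc T r - bk_cut T r = (cnt_le_Suc T r - free_hi T r) + (free_hi T r - bk_cut T r)"
  using free_hi_le_cnt_le_Suc[of r] bk_cut_le_free_hi[of r] by linarith

lemma cnt_lt_bk: "cnt_lt (bk T) r = cnt_lt T r"
  unfolding cnt_lt_def by (rule arg_cong[where f = card]) (auto simp: bk_apply)

lemma cnt_le_Suc_bk: "cnt_le_Suc (bk T) r = cnt_le_Suc T r"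
  unfolding cnt_le_Suc_def by (rule arg_cong[where f = card]) (auto simp: bk_apply)

lemma cnt_le_bk: "cnt_le (bk T) r = bk_cut T r"
proof -
  have "{c. c < row_len la r \<and> bk T (r, c) \<le> i} = {..<bk_cut T r}"
  proof (intro set_eqI iffI)
    fix c assume "c \<in> {c. c < row_len la r \<and> bk T (r, c) \<le> i}"
    then have c: "c < row_len la r" and le: "bk T (r, c) \<le> i"
      by auto
    show "c \<in> {..<bk_cut T r}"
    proof (cases "T (r, c) = i \<or> T (r, c) = Suc i")
      case False
      then have "T (r, c) < i"
        using le by (auto simp: bk_apply)
      then have "c < cnt_lt T r"
        using c cnt_lt_iff by simp
      then show ?thesis
        using cnt_lt_le_free_lo[of r] free_lo_le_bk_cut[of r] by simp
    qed (use le in \<open>auto simp: bk_apply split: if_splits\<close>)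
  next
    fix c assume cut: "c \<in> {..<bk_cut T r}"
    then have "c < cnt_le_Suc T r"
      using bk_cut_le_free_hi[of r] free_hi_le_cnt_le_Suc[of r] by simp
    moreover from this have c: "c < row_len la r"
      using cnt_le_Suc_le_row_len[of r] by simp
    ultimately have "T (r, c) \<le> Suc i"
      using cnt_le_Suc_iff[OF c] by simp
    with c cut show "c \<in> {c. c < row_len la r \<and> bk T (r, c) \<le> i}"
      by (auto simp: bk_apply)
  qed
  then show ?thesis
    unfolding cnt_le_def by simp
qed

lemma free_lo_bk: "free_lo (bk T) r = free_lo T r"
  by (simp add: free_lo_def cnt_lt_bk cnt_le_Suc_bk)

lemma free_hi_bk: "free_hi (bk T) r = free_hi T r"
  by (simp add: free_hi_def cnt_lt_bk cnt_le_Suc_bk)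

lemma entry_eq_i_iff: "c < row_len la r \<Longrightarrow> T (r, c) = i \<longleftrightarrow> cnt_lt T r \<le> c \<and> c < cnt_le T r"
  using cnt_lt_iff cnt_le_iff by force

lemma entry_eq_Suc_i_iff: "c < row_len la r \<Longrightarrow> T (r, c) = Suc i \<longleftrightarrow> cnt_le T r \<le> c \<and> c < cnt_le_Suc T r"
  using cnt_le_iff cnt_le_Suc_iff by force

lemma ssyt_bk: "ssyt la (bk T)"
  unfolding ssyt_def
proof (intro conjI allI impI ballI)
  fix x assume "x \<in> cells la"
  then show "1 \<le> bk T x"
    using T pos by (cases x) (auto simp: bk_apply ssyt_def)
next
  fix x assume "x \<notin> cells la"
  then show "bk T x = 0"
    using T pos by (cases x) (auto simp: bk_apply ssyt_def)
next
  fix r c assume "(r, c) \<in> cells la \<and> (r, Suc c) \<in> cells la"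
  then have "T (r, c) \<le> T (r, Suc c)"
    using T by (simp add: ssyt_def)
  then show "bk T (r, c) \<le> bk T (r, Suc c)"
    by (auto simp: bk_apply)
next
  fix r c assume rc: "(r, c) \<in> cells la \<and> (Suc r, c) \<in> cells la"
  then have c1: "c < row_len la (Suc r)" and c0: "c < row_len la r"
    by (auto simp: mem_cells_iff)
  have lt: "T (r, c) < T (Suc r, c)"
    using T rc by (simp add: ssyt_def)
  show "bk T (r, c) < bk T (Suc r, c)"
  proof (cases "T (r, c) = i \<and> T (Suc r, c) = Suc i")
    case True
    then have "c < cnt_le_Suc T (Suc r)" and "cnt_lt T r \<le> c"
      using cnt_le_Suc_iff[OF c1] entry_eq_i_iff[OF c0] by auto
    then have "c < bk_cut T r" and "bk_cut T (Suc r) \<le> c"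
      using free_lo_le_bk_cut[of r] bk_cut_le_free_hi[of "Suc r"] by (auto simp: free_lo_def free_hi_def)
    with True show ?thesis
      by (simp add: bk_apply)
  qed (use lt in \<open>auto simp: bk_apply\<close>)
qed

lemma bk_bk: "bk (bk T) = T"
proof -
  have "bk (bk T) (r, c) = T (r, c)" for r c
  proof (cases "T (r, c) = i \<or> T (r, c) = Suc i")
    case True
    then have c: "c < row_len la r"
      using ssyt_outside[OF T, of c r] pos by (cases "c < row_len la r") auto
    have "bk_cut (bk T) r = cnt_le T r"
      unfolding bk_cut_def free_lo_bk free_hi_bk cnt_le_bk
      using free_lo_le_cnt_le[of r] cnt_le_le_free_hi[of r] unfolding bk_cut_def by linarith
    then show ?thesis
      using True entry_eq_i_iff[OF c] entry_eq_Suc_i_iff[OF c] by (auto simp: bk_apply)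
  qed (auto simp: bk_apply)
  then show ?thesis
    by auto
qed

lemma card_row_eq_i: "card {c. c < row_len la r \<and> T (r, c) = i} = cnt_le T r - cnt_lt T r"
proof -
  have "{c. c < row_len la r \<and> T (r, c) = i} =
        {c. c < row_len la r \<and> T (r, c) \<le> i} - {c. c < row_len la r \<and> T (r, c) < i}"
    by auto
  then show ?thesis
    unfolding cnt_le_def cnt_lt_def by (simp add: card_Diff_subset subset_iff)
qed

lemma card_row_eq_Suc_i: "card {c. c < row_len la r \<and> T (r, c) = Suc i} = cnt_le_Suc T r - cnt_le T r"
proof -
  have "{c. c < row_len la r \<and> T (r, c) = Suc i} =
        {c. c < row_len la r \<and> T (r, c) \<le> Suc i} - {c. c < row_len la r \<and> T (r, c) \<le> i}"
    by auto
  then show ?thesis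
    unfolding cnt_le_def cnt_le_Suc_def by (simp add: card_Diff_subset subset_iff)
qed

text \<open>The number of entries \<open>i\<close> paired with an \<open>i + 1\<close> below equals the number of
  entries \<open>i + 1\<close> paired with an \<open>i\<close> above.\<close>

lemma sum_paired: "(\<Sum>r<length la. free_lo T r - cnt_lt T r) = (\<Sum>r<length la. cnt_le_Suc T r - free_hi T r)"
proof (cases "length la")
  case (Suc m)
  have last: "cnt_le_Suc T (Suc m) = 0"
    using cnt_le_Suc_le_row_len[of "Suc m"] Suc by (simp add: row_len_def)
  have "(\<Sum>r<Suc m. cnt_le_Suc T r - free_hi T r) =
        (\<Sum>r<m. cnt_le_Suc T (Suc r) - free_hi T (Suc r)) + (cnt_le_Suc T 0 - free_hi T 0)"
    by (subst sum.lessThan_Suc_shift) simp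
  also have "\<dots> = (\<Sum>r<m. cnt_le_Suc T (Suc r) - cnt_lt T r)"
    unfolding free_hi_def by (auto simp: min_def intro!: sum.cong)
  also have "\<dots> = (\<Sum>r<Suc m. cnt_le_Suc T (Suc r) - cnt_lt T r)"
    using last by simp
  also have "\<dots> = (\<Sum>r<Suc m. free_lo T r - cnt_lt T r)"
    by (rule sum.cong) (auto simp: free_lo_def max_def)
  finally show ?thesis
    using Suc by simp
qed simp

lemma card_bk_eq: "card {x \<in> cells la. bk T x = v} = card {x \<in> cells la. T x = transpose i (Suc i) v}"
proof -
  consider "v = i" | "v = Suc i" | "v \<noteq> i \<and> v \<noteq> Suc i"
    by auto
  then show ?thesis
  proof cases
    case 1
    have "card {x \<in> cells la. bk T x = v} = (\<Sum>r<length la. bk_cut T r - cnt_lt T r)"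
      unfolding card_cells_filter 1 using bender_knuth.card_row_eq_i[OF bender_knuth_axioms ssyt_bk]
      by (simp add: cnt_le_bk cnt_lt_bk)
    also have "\<dots> = (\<Sum>r<length la. (free_lo T r - cnt_lt T r) + (free_hi T r - cnt_le T r))"
      by (simp only: bk_cut_minus_cnt_lt)
    also have "\<dots> = (\<Sum>r<length la. (cnt_le_Suc T r - free_hi T r) + (free_hi T r - cnt_le T r))"
      by (simp add: sum.distrib sum_paired)
    also have "\<dots> = (\<Sum>r<length la. cnt_le_Suc T r - cnt_le T r)"
      by (simp only: cnt_le_Suc_minus_cnt_le)
    also have "\<dots> = card {x \<in> cells la. T x = transpose i (Suc i) v}"
      unfolding card_cells_filter 1 by (simp add: card_row_eq_Suc_i)
    finally show ?thesis .
  next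
    case 2
    have "card {x \<in> cells la. bk T x = v} = (\<Sum>r<length la. cnt_le_Suc T r - bk_cut T r)"
      unfolding card_cells_filter 2 using bender_knuth.card_row_eq_Suc_i[OF bender_knuth_axioms ssyt_bk]
      by (simp add: cnt_le_bk cnt_le_Suc_bk)
    also have "\<dots> = (\<Sum>r<length la. (cnt_le_Suc T r - free_hi T r) + (free_hi T r - bk_cut T r))"
      by (simp only: cnt_le_Suc_minus_bk_cut)
    also have "\<dots> = (\<Sum>r<length la. (free_lo T r - cnt_lt T r) + (free_hi T r - bk_cut T r))"
      by (simp add: sum.distrib sum_paired)
    also have "\<dots> = (\<Sum>r<length la. cnt_le T r - cnt_lt T r)"
      by (simp only: cnt_le_minus_cnt_lt)
    also have "\<dots> = card {x \<in> cells la. T x = transpose i (Suc i) v}"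
      unfolding card_cells_filter 2 by (simp add: card_row_eq_i)
    finally show ?thesis .
  next
    case 3
    then have "{x \<in> cells la. bk T x = v} = {x \<in> cells la. T x = transpose i (Suc i) v}"
      by (auto simp: bk_apply transpose_def)
    then show ?thesis
      by simp
  qed
qed

end

lemma bk_mem_tableaux: "T \<in> tableaux la e \<Longrightarrow> bk T \<in> tableaux la (e \<circ> transpose i (Suc i))"
  unfolding tableaux_def using ssyt_bk card_bk_eq by auto

lemma kostka_transpose: "kostka la (e \<circ> transpose i (Suc i)) = kostka la e"
proof -
  have "bij_betw bk (tableaux la e) (tableaux la (e \<circ> transpose i (Suc i)))"
  proof (rule bij_betw_byWitness[where f' = bk])
    show "bk ` tableaux la e \<subseteq> tableaux la (e \<circ> transpose i (Suc i))"
      using bk_mem_tableaux by blast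
    show "bk ` tableaux la (e \<circ> transpose i (Suc i)) \<subseteq> tableaux la e"
      using bk_mem_tableaux[of _ "e \<circ> transpose i (Suc i)"] by (auto simp: comp_assoc)
  qed (auto simp: tableaux_def bk_bk)
  then show ?thesis
    unfolding kostka_eq_card_tableaux by (simp add: bij_betw_same_card)
qed

end

section \<open>Schur expansions of symmetric coefficient functions\<close>

text \<open>The exponent vector of \<open>x^\<lambda> = x\<^sub>1^\<lambda>\<^sub>1 x\<^sub>2^\<lambda>\<^sub>2 \<dots>\<close>; variable \<open>0\<close> is unused.\<close>

definition partition_exp :: "nat list \<Rightarrow> nat \<Rightarrow> nat" where
  "partition_exp la v = (if v = 0 then 0 else row_len la (v - 1))"

definition symmetric_coeffs :: "((nat \<Rightarrow> nat) \<Rightarrow> int) \<Rightarrow> bool" where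
  "symmetric_coeffs f \<longleftrightarrow> (\<forall>e\<in>monomials. \<forall>i\<ge>1. f (e \<circ> transpose i (Suc i)) = f e)"

lemma partition_exp_Suc [simp]: "partition_exp la (Suc r) = row_len la r"
  by (simp add: partition_exp_def)

lemma support_partition_exp: "{v. partition_exp la v \<noteq> 0} \<subseteq> Suc ` {..<length la}"
proof
  fix v assume "v \<in> {v. partition_exp la v \<noteq> 0}"
  then show "v \<in> Suc ` {..<length la}"
    by (cases v) (auto simp: partition_exp_def row_len_def split: if_splits)
qed

lemma partition_exp_mem_monomials: "partition_exp la \<in> monomials"
proof -
  have "finite {v. partition_exp la v \<noteq> 0}"
    by (rule finite_subset[OF support_partition_exp]) simp
  then show ?thesis
    by (simp add: monomials_def partition_exp_def)
qed

lemma mdeg_partition_exp: "mdeg (partition_exp la) = sum_list la"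
proof -
  have "mdeg (partition_exp la) = sum (partition_exp la) (Suc ` {..<length la})"
    unfolding mdeg_def using support_partition_exp by (intro sum.mono_neutral_left) auto
  also have "\<dots> = sum_list la"
    by (simp add: sum.reindex row_len_def sum_list_sum_nth atLeast0LessThan)
  finally show ?thesis .
qed

lemma mdeg_comp_transpose: "mdeg (e \<circ> transpose a b) = mdeg e"
proof -
  have "bij_betw (transpose a b) {i. e (transpose a b i) \<noteq> 0} {i. e i \<noteq> 0}"
    by (rule bij_betw_byWitness[where f' = "transpose a b"]) auto
  then show ?thesis
    unfolding mdeg_def comp_def by (rule sum.reindex_bij_betw[where h = "transpose a b" and g = e])
qed

lemma symmetric_coeffs_mdeg: "symmetric_coeffs (\<lambda>e. int (mdeg e))"
  by (simp add: symmetric_coeffs_def mdeg_comp_transpose)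

lemma finite_partitions: "finite {la. is_partition la \<and> sum_list la = d}"
proof (rule finite_subset)
  show "{la. is_partition la \<and> sum_list la = d} \<subseteq> {xs. set xs \<subseteq> {..d} \<and> length xs \<le> d}"
  proof
    fix la assume "la \<in> {la. is_partition la \<and> sum_list la = d}"
    then have la: "is_partition la" and d: "sum_list la = d"
      by auto
    have "\<forall>x\<in>set la. 0 < x"
      using la by (simp add: is_partition_def)
    then have "length la \<le> sum_list la"
      by (induction la) auto
    then have "length la \<le> d"
      using d by simp
    moreover have "set la \<subseteq> {..d}"
      using member_le_sum_list[of _ la] d by auto
    ultimately show "la \<in> {xs. set xs \<subseteq> {..d} \<and> length xs \<le> d}"
      by simp
  qed
  show "finite {xs. set xs \<subseteq> {..d} \<and> length xs \<le> d}"
    by (rule finite_lists_length_le) simp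
qed

lemma weight_comp_transpose:
  assumes "Suc i < N"
  shows "(\<Sum>v<N. v * e (transpose i (Suc i) v)) + e (Suc i) = (\<Sum>v<N. v * e v) + e i"
proof -
  have i: "i \<in> {..<N}" "Suc i \<in> {..<N} - {i}"
    using assms by auto
  have split: "(\<Sum>v<N. h v) = (\<Sum>v\<in>{..<N} - {i} - {Suc i}. h v) + h i + h (Suc i)" for h :: "nat \<Rightarrow> nat"
    using sum.remove[OF _ i(1), of h] sum.remove[of "{..<N} - {i}" "Suc i" h] i by simp
  have "(\<Sum>v\<in>{..<N} - {i} - {Suc i}. v * e (transpose i (Suc i) v)) = (\<Sum>v\<in>{..<N} - {i} - {Suc i}. v * e v)"
    by (rule sum.cong) auto
  then show ?thesis
    unfolding split[of "\<lambda>v. v * e (transpose i (Suc i) v)"] split[of "\<lambda>v. v * e v"]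
    by (simp add: algebra_simps)
qed

lemma antitone_exp:
  assumes step: "\<And>m. 1 \<le> m \<Longrightarrow> Suc m < N \<Longrightarrow> e (Suc m) \<le> e m" and vanish: "\<And>v. N \<le> v \<Longrightarrow> e v = 0"
    and "1 \<le> u" and "u \<le> v"
  shows "e v \<le> (e u :: nat)"
  using assms(4)
proof (induction v rule: dec_induct)
  case (step m)
  have "e (Suc m) \<le> e m"
    using assms(1)[of m] vanish[of "Suc m"] step.hyps \<open>1 \<le> u\<close> by (cases "Suc m < N") auto
  with step.IH show ?case
    by simp
qed simp

lemma antitone_exp_eq_partition_exp:
  assumes zero: "e 0 = 0" and vanish: "\<And>v. N \<le> v \<Longrightarrow> e v = 0"
    and step: "\<And>m. 1 \<le> m \<Longrightarrow> Suc m < N \<Longrightarrow> e (Suc m) \<le> e m"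
  shows "\<exists>la. is_partition la \<and> e = partition_exp la"
proof -
  have anti: "e (Suc v) \<le> e (Suc u)" if "u \<le> v" for u v
    using antitone_exp[of N e, OF step vanish, of "Suc u" "Suc v"] that by simp
  define K where "K = card {v. 0 < e (Suc v)}"
  have "{v. 0 < e (Suc v)} \<subseteq> {..<N}"
  proof
    fix v assume "v \<in> {v. 0 < e (Suc v)}"
    then show "v \<in> {..<N}"
      using vanish[of "Suc v"] by (cases "N \<le> Suc v") auto
  qed
  then have "{v. 0 < e (Suc v)} = {..<K}"
    unfolding K_def
  proof (intro down_closed_eq_lessThan)
    show "finite {v. 0 < e (Suc v)}" if "{v. 0 < e (Suc v)} \<subseteq> {..<N}"
      using that finite_subset by blast
    show "y \<in> {v. 0 < e (Suc v)}" if "x \<in> {v. 0 < e (Suc v)}" and "y \<le> x" for x y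
      using that anti[of y x] by simp
  qed
  then have pos: "0 < e (Suc v) \<longleftrightarrow> v < K" for v
    by blast
  define la where "la = map (\<lambda>v. e (Suc v)) [0..<K]"
  have "sorted_wrt (\<ge>) la"
    unfolding sorted_wrt_iff_nth_less by (simp add: la_def anti)
  moreover have "\<forall>x\<in>set la. 0 < x"
    using pos by (simp add: la_def)
  ultimately have "is_partition la"
    by (simp add: is_partition_def)
  moreover have "e = partition_exp la"
  proof
    fix v show "e v = partition_exp la v"
      using zero pos[of "v - 1"] by (cases v) (auto simp: la_def row_len_def partition_exp_def)
  qed
  ultimately show ?thesis
    by blast
qed

text \<open>Repeatedly swapping an ascent \<open>e i < e (i + 1)\<close> sorts \<open>e\<close>; each swap lowers
  \<open>\<Sum> v \<cdot> e v\<close>.\<close>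

lemma symmetric_coeffs_eq_partition_exp_aux:
  "e 0 = 0 \<Longrightarrow> (\<And>v. N \<le> v \<Longrightarrow> e v = 0) \<Longrightarrow>
    \<exists>la. is_partition la \<and> (\<forall>g. symmetric_coeffs g \<longrightarrow> g e = g (partition_exp la))"
proof (induction "\<Sum>v<N. v * e v" arbitrary: e rule: less_induct)
  case less
  show ?case
  proof (cases "\<exists>i. 1 \<le> i \<and> Suc i < N \<and> e i < e (Suc i)")
    case True
    then obtain i where i: "1 \<le> i" "Suc i < N" "e i < e (Suc i)"
      by blast
    define e' where "e' = e \<circ> transpose i (Suc i)"
    have smaller: "(\<Sum>v<N. v * e' v) < (\<Sum>v<N. v * e v)"
      using weight_comp_transpose[OF i(2), of e] i(3) unfolding e'_def by simp
    have e'0: "e' 0 = 0" and e'N: "\<And>v. N \<le> v \<Longrightarrow> e' v = 0"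
      using less.prems i by (auto simp: e'_def transpose_def)
    obtain la where la: "is_partition la"
      and sym: "\<forall>g. symmetric_coeffs g \<longrightarrow> g e' = g (partition_exp la)"
      using less.hyps[OF smaller e'0 e'N] by blast
    have "{v. e' v \<noteq> 0} \<subseteq> {..<N}"
      using e'N not_less by blast
    then have "e' \<in> monomials"
      unfolding monomials_def using e'0 finite_subset by blast
    moreover have "e = e' \<circ> transpose i (Suc i)"
      by (simp add: e'_def comp_assoc)
    ultimately have swap: "g e = g e'" if "symmetric_coeffs g" for g
      using that i(1) unfolding symmetric_coeffs_def by simp
    show ?thesis
    proof (intro exI[of _ la] conjI allI impI)
      fix g assume "symmetric_coeffs g"
      with swap[of g] sym show "g e = g (partition_exp la)"
        by simp
    qed (rule la)
  next
    case False
    then have "\<And>m. 1 \<le> m \<Longrightarrow> Suc m < N \<Longrightarrow> e (Suc m) \<le> e m"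
      by (meson not_le)
    then obtain la where "is_partition la" "e = partition_exp la"
      using antitone_exp_eq_partition_exp[of e N] less.prems by blast
    then show ?thesis
      by blast
  qed
qed

lemma symmetric_coeffs_eq_partition_exp:
  assumes "e \<in> monomials"
  obtains la where "is_partition la" and "sum_list la = mdeg e"
    and "\<And>g. symmetric_coeffs g \<Longrightarrow> g e = g (partition_exp la)"
proof -
  have fin: "finite {i. e i \<noteq> 0}" and e0: "e 0 = 0"
    using assms by (simp_all add: monomials_def)
  obtain N where "\<forall>v\<in>{i. e i \<noteq> 0}. v < N"
    using finite_nat_bounded[OF fin] by blast
  then have "\<And>v. N \<le> v \<Longrightarrow> e v = 0"
    by (meson leD mem_Collect_eq)
  then obtain la where la: "is_partition la"
    and sym: "\<forall>g. symmetric_coeffs g \<longrightarrow> g e = g (partition_exp la)"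
    using symmetric_coeffs_eq_partition_exp_aux[of e N, OF e0] by blast
  have "int (mdeg e) = int (mdeg (partition_exp la))"
    using sym[rule_format, OF symmetric_coeffs_mdeg] .
  then have "sum_list la = mdeg e"
    by (simp add: mdeg_partition_exp)
  then show ?thesis
    by (rule that[OF la]) (use sym in auto)
qed

definition row_sum :: "nat list \<Rightarrow> nat \<Rightarrow> nat" where
  "row_sum la s = (\<Sum>r<s. row_len la r)"

lemma sum_partition_exp: "(\<Sum>v\<le>s. partition_exp la v) = row_sum la s"
  by (induction s) (auto simp: row_sum_def partition_exp_def)

lemma card_cells_upper_rows: "card {x \<in> cells mu. fst x < s} = row_sum mu s"
proof -
  have "{x \<in> cells mu. fst x < s} = Sigma {..<s} (\<lambda>r. {..<row_len mu r})"
    by (auto simp: mem_cells_iff)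
  then show ?thesis
    by (simp add: row_sum_def)
qed

lemma card_tableau_entries_le:
  assumes "T \<in> tableaux mu e"
  shows "card {x \<in> cells mu. T x \<le> s} = (\<Sum>v\<le>s. e v)"
proof -
  have "card {x \<in> cells mu. T x \<le> s} = card (\<Union>v\<in>{..s}. {x \<in> cells mu. T x = v})"
    by (rule arg_cong[where f = card]) auto
  also have "\<dots> = (\<Sum>v\<le>s. card {x \<in> cells mu. T x = v})"
    by (rule card_UN_disjoint) (auto simp: finite_cells)
  finally show ?thesis
    using assms by (simp add: tableaux_def)
qed

lemma ssyt_entries_le_subset:
  assumes "ssyt mu T" and "is_partition mu"
  shows "{x \<in> cells mu. T x \<le> s} \<subseteq> {x \<in> cells mu. fst x < s}"
proof
  fix x assume x: "x \<in> {x \<in> cells mu. T x \<le> s}"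
  obtain r c where rc: "x = (r, c)"
    by fastforce
  then have "Suc r \<le> T (r, c)"
    using x ssyt_entry_ge_row[OF assms, of c r] by (simp add: mem_cells_iff)
  then show "x \<in> {x \<in> cells mu. fst x < s}"
    using x rc by simp
qed

lemma row_sum_dominance:
  assumes "T \<in> tableaux mu (partition_exp la)" and "is_partition mu"
  shows "row_sum la s \<le> row_sum mu s"
proof -
  have "card {x \<in> cells mu. T x \<le> s} \<le> card {x \<in> cells mu. fst x < s}"
    using assms by (intro card_mono ssyt_entries_le_subset) (auto simp: finite_cells tableaux_def)
  then show ?thesis
    using card_tableau_entries_le[OF assms(1)] by (simp add: sum_partition_exp card_cells_upper_rows)
qed

definition partition_n :: "nat list \<Rightarrow> nat" where
  "partition_n xs = (\<Sum>r<length xs. r * xs ! r)"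

lemma partition_n_plus_row_sums:
  assumes "length xs \<le> N"
  shows "partition_n xs + (\<Sum>s<N. row_sum xs (Suc s)) = N * sum_list xs"
proof -
  have "(\<Sum>r<N. r * x r) + (\<Sum>s<N. \<Sum>r<Suc s. x r) = N * (\<Sum>r<N. x r)" for x :: "nat \<Rightarrow> nat"
    by (induction N) (auto simp: algebra_simps)
  moreover have "(\<Sum>r<N. r * row_len xs r) = partition_n xs"
  proof -
    have "(\<Sum>r<N. r * row_len xs r) = (\<Sum>r<length xs. r * row_len xs r)"
      using assms by (intro sum.mono_neutral_right) (auto simp: row_len_def)
    then show ?thesis
      by (simp add: partition_n_def row_len_def)
  qed
  moreover have "(\<Sum>r<N. row_len xs r) = sum_list xs"
  proof -
    have "(\<Sum>r<N. row_len xs r) = (\<Sum>r<length xs. row_len xs r)"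
      using assms by (intro sum.mono_neutral_right) (auto simp: row_len_def)
    then show ?thesis
      by (simp add: row_len_def sum_list_sum_nth atLeast0LessThan)
  qed
  ultimately show ?thesis
    unfolding row_sum_def by metis
qed

lemma partition_eqI:
  assumes "is_partition xs" and "is_partition ys" and "\<And>r. row_len xs r = row_len ys r"
  shows "xs = ys"
proof (rule nth_equalityI)
  have "\<not> length xs < length ys" and "\<not> length ys < length xs"
    using row_len_pos_iff[OF assms(1)] row_len_pos_iff[OF assms(2)] assms(3)
    by (metis less_irrefl)+
  then show "length xs = length ys"
    by simp
  then show "xs ! r = ys ! r" if "r < length xs" for r
    using assms(3)[of r] that by (simp add: row_len_def)
qed

text \<open>A tableau of shape \<open>\<mu>\<close> and content \<open>\<lambda>\<close> forces \<open>\<mu>\<close> to dominate \<open>\<lambda>\<close>, and the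
  statistic \<open>n\<close> strictly decreases from \<open>\<lambda>\<close> to any partition properly dominating it.\<close>

lemma partition_n_less_if_tableau:
  assumes mu: "is_partition mu" and la: "is_partition la" and sum: "sum_list mu = sum_list la"
    and T: "T \<in> tableaux mu (partition_exp la)" and ne: "mu \<noteq> la"
  shows "partition_n mu < partition_n la"
proof -
  have dom: "\<And>s. row_sum la s \<le> row_sum mu s"
    using row_sum_dominance[OF T mu] .
  define N where "N = length mu + length la"
  have "\<exists>r. row_len mu r \<noteq> row_len la r"
    using partition_eqI[OF mu la] ne by blast
  define r where "r = (LEAST r. row_len mu r \<noteq> row_len la r)"
  have r: "row_len mu r \<noteq> row_len la r"
    unfolding r_def using \<open>\<exists>r. row_len mu r \<noteq> row_len la r\<close> by (rule LeastI_ex)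
  have below: "\<And>q. q < r \<Longrightarrow> row_len mu q = row_len la q"
    unfolding r_def using not_less_Least by blast
  have "r < N"
  proof (rule ccontr)
    assume "\<not> r < N"
    then show False
      using r by (simp add: N_def row_len_def)
  qed
  have "row_sum mu r = row_sum la r"
    unfolding row_sum_def using below by simp
  then have "row_sum la (Suc r) < row_sum mu (Suc r)"
    using dom[of "Suc r"] r by (simp add: row_sum_def)
  then have "(\<Sum>s<N. row_sum la (Suc s)) < (\<Sum>s<N. row_sum mu (Suc s))"
    using dom \<open>r < N\<close> by (intro sum_strict_mono_ex1) auto
  moreover have "partition_n mu + (\<Sum>s<N. row_sum mu (Suc s)) = partition_n la + (\<Sum>s<N. row_sum la (Suc s))"
    using partition_n_plus_row_sums[of mu N] partition_n_plus_row_sums[of la N] sum by (simp add: N_def)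
  ultimately show ?thesis
    by linarith
qed

definition superstandard :: "nat list \<Rightarrow> nat \<times> nat \<Rightarrow> nat" where
  "superstandard la = (\<lambda>(r, c). if c < row_len la r then Suc r else 0)"

lemma superstandard_mem_tableaux: "superstandard la \<in> tableaux la (partition_exp la)"
proof -
  have "ssyt la (superstandard la)"
    unfolding ssyt_def superstandard_def by (auto simp: mem_cells_iff)
  moreover have "card {x \<in> cells la. superstandard la x = v} = partition_exp la v" for v
  proof (cases v)
    case 0
    then have "{x \<in> cells la. superstandard la x = v} = {}"
      by (auto simp: superstandard_def mem_cells_iff)
    then show ?thesis
      using 0 by (metis card.empty partition_exp_def)
  next
    case (Suc r)
    then have "{x \<in> cells la. superstandard la x = v} = Pair r ` {..<row_len la r}"
      by (auto simp: superstandard_def mem_cells_iff split: if_splits)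
    then show ?thesis
      using Suc by (simp add: card_image inj_on_def)
  qed
  ultimately show ?thesis
    by (simp add: tableaux_def)
qed

text \<open>A tableau of content \<open>\<lambda>\<close> has all entries of row \<open>r\<close> at least \<open>r + 1\<close>, and the
  \<open>\<lambda>\<^sub>1 + \<dots> + \<lambda>\<^sub>r\<^sub>+\<^sub>1\<close> entries \<open>\<le> r + 1\<close> must fill the first \<open>r + 1\<close> rows.\<close>

lemma tableaux_partition_exp_self:
  assumes la: "is_partition la"
  shows "tableaux la (partition_exp la) = {superstandard la}"
proof (intro equalityI subsetI)
  fix T assume T: "T \<in> tableaux la (partition_exp la)"
  then have Ts: "ssyt la T"
    by (simp add: tableaux_def)
  have "T (r, c) = superstandard la (r, c)" for r c
  proof (cases "c < row_len la r")
    case True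
    have "card {x \<in> cells la. T x \<le> Suc r} = card {x \<in> cells la. fst x < Suc r}"
      using card_tableau_entries_le[OF T] by (simp add: sum_partition_exp card_cells_upper_rows)
    then have "{x \<in> cells la. T x \<le> Suc r} = {x \<in> cells la. fst x < Suc r}"
      using card_subset_eq[OF _ ssyt_entries_le_subset[OF Ts la]] finite_cells by auto
    moreover have "(r, c) \<in> {x \<in> cells la. fst x < Suc r}"
      using True by (simp add: mem_cells_iff)
    ultimately have "T (r, c) \<le> Suc r"
      by blast
    then show ?thesis
      using ssyt_entry_ge_row[OF Ts la True] True by (simp add: superstandard_def)
  qed (simp add: ssyt_outside[OF Ts] superstandard_def)
  then show "T \<in> {superstandard la}"
    by auto
qed (use superstandard_mem_tableaux in blast)

lemma kostka_partition_exp_self: "is_partition la \<Longrightarrow> kostka la (partition_exp la) = 1"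
  by (simp add: kostka_eq_card_tableaux tableaux_partition_exp_self)

lemma symmetric_coeffs_kostka: "is_partition mu \<Longrightarrow> symmetric_coeffs (\<lambda>e. int (kostka mu e))"
  using bender_knuth.kostka_transpose by (simp add: symmetric_coeffs_def bender_knuth_def)

text \<open>Solving \<open>f(x^\<lambda>) = \<Sum>\<^sub>\<mu> c\<^sub>\<mu> K\<^sub>\<mu>\<^sub>\<lambda>\<close> for \<open>c\<^sub>\<lambda>\<close>: this is a triangular system, as
  \<open>K\<^sub>\<lambda>\<^sub>\<lambda> = 1\<close> and \<open>K\<^sub>\<mu>\<^sub>\<lambda> = 0\<close> unless \<open>\<mu> = \<lambda>\<close> or \<open>n(\<mu>) < n(\<lambda>)\<close>.\<close>

function schur_coeff :: "((nat \<Rightarrow> nat) \<Rightarrow> int) \<Rightarrow> nat list \<Rightarrow> int" where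
  "schur_coeff f la = f (partition_exp la) -
     (\<Sum>mu\<in>{mu. is_partition mu \<and> sum_list mu = sum_list la \<and> partition_n mu < partition_n la}.
        schur_coeff f mu * int (kostka mu (partition_exp la)))"
  by auto
termination
  by (relation "measure (\<lambda>(f, la). partition_n la)") auto

declare schur_coeff.simps [simp del]

lemma schur_coeff_partition_exp:
  assumes la: "is_partition la"
  shows "f (partition_exp la) =
    (\<Sum>mu\<in>{mu. is_partition mu \<and> sum_list mu = sum_list la}. schur_coeff f mu * int (kostka mu (partition_exp la)))"
proof -
  define P where "P = {mu. is_partition mu \<and> sum_list mu = sum_list la}"
  define Lt where "Lt = {mu \<in> P. partition_n mu < partition_n la}"
  have finP: "finite P"
    unfolding P_def by (rule finite_partitions)
  have sub: "insert la Lt \<subseteq> P"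
    using la by (auto simp: P_def Lt_def)
  have "kostka mu (partition_exp la) = 0" if "mu \<in> P - insert la Lt" for mu
    using that partition_n_less_if_tableau[OF _ la, of mu]
    by (auto simp: P_def Lt_def kostka_eq_card_tableaux card_eq_0_iff finite_subset)
  then have "(\<Sum>mu\<in>P. schur_coeff f mu * int (kostka mu (partition_exp la))) =
             (\<Sum>mu\<in>insert la Lt. schur_coeff f mu * int (kostka mu (partition_exp la)))"
    by (intro sum.mono_neutral_right[OF finP sub]) auto
  also have "\<dots> = schur_coeff f la + (\<Sum>mu\<in>Lt. schur_coeff f mu * int (kostka mu (partition_exp la)))"
    using finite_subset[OF _ finP] sub kostka_partition_exp_self[OF la] by (simp add: Lt_def)
  also have "\<dots> = f (partition_exp la)"
    using schur_coeff.simps[of f la] by (simp add: Lt_def P_def conj_assoc)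
  finally show ?thesis
    by (simp add: P_def)
qed

theorem schur_expansion_schur_coeff:
  assumes f: "symmetric_coeffs f"
  shows "schur_expansion f (schur_coeff f)"
  unfolding schur_expansion_def
proof
  fix e assume "e \<in> monomials"
  then obtain la where la: "is_partition la" "sum_list la = mdeg e"
    and sym: "\<forall>g. symmetric_coeffs g \<longrightarrow> g e = g (partition_exp la)"
    using symmetric_coeffs_eq_partition_exp by blast
  have "f e = f (partition_exp la)"
    using sym f by blast
  also have "\<dots> = (\<Sum>mu\<in>{mu. is_partition mu \<and> sum_list mu = mdeg e}.
                     schur_coeff f mu * int (kostka mu (partition_exp la)))"
    using schur_coeff_partition_exp[OF la(1)] la(2) by simp
  also have "\<dots> = (\<Sum>mu\<in>{mu. is_partition mu \<and> sum_list mu = mdeg e}. schur_coeff f mu * int (kostka mu e))"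
  proof (rule sum.cong[OF refl])
    fix mu assume "mu \<in> {mu. is_partition mu \<and> sum_list mu = mdeg e}"
    then have "(\<lambda>e. int (kostka mu e)) e = (\<lambda>e. int (kostka mu e)) (partition_exp la)"
      using sym symmetric_coeffs_kostka[of mu] by blast
    then have "int (kostka mu e) = int (kostka mu (partition_exp la))"
      by simp
    then show "schur_coeff f mu * int (kostka mu (partition_exp la)) = schur_coeff f mu * int (kostka mu e)"
      by simp
  qed
  finally show "f e = (\<Sum>mu\<in>{mu. is_partition mu \<and> sum_list mu = mdeg e}. schur_coeff f mu * int (kostka mu e))" .
qed

lemma schur_coeff_partition_n_0: "partition_n la = 0 \<Longrightarrow> schur_coeff f la = f (partition_exp la)"
  by (simp add: schur_coeff.simps[of f la])

section \<open>Two-row Schur coefficients\<close>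

lemma partition_exp_two_rows: "partition_exp [a, b] v = (if v = 1 then a else if v = 2 then b else 0)"
  by (auto simp: partition_exp_def row_len_def nth_Cons split: nat.split)

lemma sum_list_two_rows:
  assumes "length mu \<le> 2"
  shows "sum_list mu = row_len mu 0 + row_len mu 1"
proof -
  have "sum_list mu = (\<Sum>r<length mu. row_len mu r)"
    by (simp add: row_len_def sum_list_sum_nth atLeast0LessThan)
  also have "\<dots> = (\<Sum>r<2. row_len mu r)"
    using assms by (intro sum.mono_neutral_left) (auto simp: row_len_def)
  finally show ?thesis
    by (simp add: numeral_2_eq_2)
qed

lemma card_cells_two_rows:
  assumes "length mu \<le> 2"
  shows "card {x \<in> cells mu. P x} = card {c. c < row_len mu 0 \<and> P (0, c)} + card {c. c < row_len mu 1 \<and> P (1, c)}"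
proof -
  have "card {x \<in> cells mu. P x} = (\<Sum>r<2. card {c. c < row_len mu r \<and> P (r, c)})"
    unfolding card_cells_filter using assms by (intro sum.mono_neutral_left) (auto simp: row_len_def)
  then show ?thesis
    by (simp add: numeral_2_eq_2)
qed

lemma tableau_entry_in_content:
  assumes "T \<in> tableaux mu e" and "c < row_len mu r"
  shows "e (T (r, c)) \<noteq> 0"
proof -
  have "(r, c) \<in> {x \<in> cells mu. T x = T (r, c)}"
    using assms(2) by (simp add: mem_cells_iff)
  then have "card {x \<in> cells mu. T x = T (r, c)} \<noteq> 0"
    using finite_cells by (auto simp: card_eq_0_iff)
  then show ?thesis
    using assms(1) by (simp add: tableaux_def)
qed

definition two_row_tableau :: "nat list \<Rightarrow> nat \<Rightarrow> nat \<times> nat \<Rightarrow> nat" where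
  "two_row_tableau mu a = (\<lambda>(r, c). if r = 0 \<and> c < row_len mu 0 then (if c < a then 1 else 2)
                                    else if r = 1 \<and> c < row_len mu 1 then 2 else 0)"

lemma tableaux_two_rows_shape:
  assumes p: "is_partition mu" and T: "T \<in> tableaux mu (partition_exp [a, b])"
  shows "length mu \<le> 2" and "\<And>c. c < row_len mu 1 \<Longrightarrow> T (1, c) = 2"
    and "\<And>c. c < row_len mu 0 \<Longrightarrow> T (0, c) = 1 \<or> T (0, c) = 2"
proof -
  have Ts: "ssyt mu T"
    using T by (simp add: tableaux_def)
  have le2: "T (r, c) \<le> 2" if "c < row_len mu r" for r c
    using tableau_entry_in_content[OF T that] by (auto simp: partition_exp_two_rows split: if_splits)
  show "length mu \<le> 2"
  proof (rule ccontr)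
    assume "\<not> length mu \<le> 2"
    then have "0 < row_len mu 2"
      using row_len_pos_iff[OF p] by simp
    then show False
      using ssyt_entry_ge_row[OF Ts p, of 0 2] le2[of 0 2] by simp
  qed
  show "T (1, c) = 2" if "c < row_len mu 1" for c
    using ssyt_entry_ge_row[OF Ts p that] le2[OF that] by simp
  show "T (0, c) = 1 \<or> T (0, c) = 2" if "c < row_len mu 0" for c
    using ssyt_entry_pos[OF Ts that] le2[OF that] by auto
qed

lemma tableaux_two_rows_first_row:
  assumes p: "is_partition mu" and T: "T \<in> tableaux mu (partition_exp [a, b])"
  shows "a \<le> row_len mu 0" and "\<And>c. c < row_len mu 0 \<Longrightarrow> T (0, c) = 1 \<longleftrightarrow> c < a"
proof -
  have Ts: "ssyt mu T"
    using T by (simp add: tableaux_def)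
  note shape = tableaux_two_rows_shape[OF p T]
  define M where "M = card {c. c < row_len mu 0 \<and> T (0, c) \<le> 1}"
  have row0: "T (0, c) = 1 \<longleftrightarrow> c < M" if "c < row_len mu 0" for c
  proof -
    have "T (0, c) \<le> 1 \<longleftrightarrow> c < M"
      unfolding M_def by (rule ssyt_row_prefix_iff[OF Ts]) (use that in auto)
    then show ?thesis
      using shape(3)[OF that] by auto
  qed
  have "M \<le> row_len mu 0"
    unfolding M_def by (rule card_row_filter_le)
  have "a = card {x \<in> cells mu. T x = 1}"
    using T by (simp add: tableaux_def partition_exp_two_rows)
  also have "\<dots> = card {c. c < row_len mu 0 \<and> T (0, c) = 1} + card {c. c < row_len mu 1 \<and> T (1, c) = 1}"
    by (rule card_cells_two_rows[OF shape(1)])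
  also have "{c. c < row_len mu 0 \<and> T (0, c) = 1} = {..<M}"
    using row0 \<open>M \<le> row_len mu 0\<close> by auto
  also have "{c. c < row_len mu 1 \<and> T (1, c) = 1} = {}"
    using shape(2) by auto
  finally have "M = a"
    by simp
  with \<open>M \<le> row_len mu 0\<close> show "a \<le> row_len mu 0"
    by simp
  show "T (0, c) = 1 \<longleftrightarrow> c < a" if "c < row_len mu 0" for c
    using row0[OF that] \<open>M = a\<close> by simp
qed

lemma tableaux_two_rows_unique:
  assumes p: "is_partition mu" and s: "sum_list mu = a + b" and T: "T \<in> tableaux mu (partition_exp [a, b])"
  shows "T = two_row_tableau mu a" and "length mu \<le> 2" and "row_len mu 1 \<le> a" and "row_len mu 1 \<le> b"
proof -
  have Ts: "ssyt mu T"
    using T by (simp add: tableaux_def)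
  note shape = tableaux_two_rows_shape[OF p T] and row0 = tableaux_two_rows_first_row[OF p T]
  show len: "length mu \<le> 2"
    by (fact shape(1))
  show "row_len mu 1 \<le> a"
  proof (rule ccontr)
    assume "\<not> row_len mu 1 \<le> a"
    then have "a < row_len mu 1" and a0: "a < row_len mu 0"
      using row_len_antimono[OF p, of 0 1] by auto
    then have "T (0, a) < 2"
      using ssyt_col_strict[OF Ts p, of a 0] shape(2) by simp
    then show False
      using row0(2)[OF a0] shape(3)[OF a0] by simp
  qed
  show "row_len mu 1 \<le> b"
    using sum_list_two_rows[OF len] s row0(1) by simp
  have "T (r, c) = two_row_tableau mu a (r, c)" for r c
  proof (cases "c < row_len mu r")
    case True
    then consider "r = 0" | "r = 1"
      using len row_len_pos_iff[OF p, of r] by linarith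
    then show ?thesis
      using True row0(2)[of c] shape(2)[of c] shape(3)[of c] by cases (auto simp: two_row_tableau_def)
  qed (auto simp: ssyt_outside[OF Ts] two_row_tableau_def)
  then show "T = two_row_tableau mu a"
    by auto
qed

lemma two_row_tableau_mem_tableaux:
  assumes p: "is_partition mu" and s: "sum_list mu = a + b" and len: "length mu \<le> 2"
    and m1a: "row_len mu 1 \<le> a" and m1b: "row_len mu 1 \<le> b"
  shows "two_row_tableau mu a \<in> tableaux mu (partition_exp [a, b])"
proof -
  define m0 where "m0 = row_len mu 0"
  define m1 where "m1 = row_len mu 1"
  have sm: "m0 + m1 = a + b"
    using sum_list_two_rows[OF len] s by (simp add: m0_def m1_def)
  have am0: "a \<le> m0"
    using sm m1b unfolding m1_def by linarith
  have cells: "(r, c) \<in> cells mu \<longleftrightarrow> (r = 0 \<and> c < m0) \<or> (r = 1 \<and> c < m1)" for r c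
  proof (cases "r = 0 \<or> r = 1")
    case False
    then have "row_len mu r = 0"
      using len by (simp add: row_len_def)
    with False show ?thesis
      by (simp add: mem_cells_iff)
  qed (auto simp: mem_cells_iff m0_def m1_def)
  have "ssyt mu (two_row_tableau mu a)"
    unfolding ssyt_def using cells m1a by (auto simp: two_row_tableau_def m0_def m1_def)
  moreover have "card {x \<in> cells mu. two_row_tableau mu a x = v} = partition_exp [a, b] v" for v
  proof -
    have "{c. c < m0 \<and> two_row_tableau mu a (0, c) = v} = (if v = 1 then {..<a} else if v = 2 then {a..<m0} else {})"
      and "{c. c < m1 \<and> two_row_tableau mu a (1, c) = v} = (if v = 2 then {..<m1} else {})"
      using sm m1b by (auto simp: two_row_tableau_def m0_def m1_def)
    then show ?thesis
      unfolding card_cells_two_rows[OF len] m0_def[symmetric] m1_def[symmetric]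
      using sm am0 by (simp add: partition_exp_two_rows)
  qed
  ultimately show ?thesis
    by (simp add: tableaux_def)
qed

lemma kostka_two_rows:
  assumes "is_partition mu" and "sum_list mu = a + b"
  shows "kostka mu (partition_exp [a, b]) = (if length mu \<le> 2 \<and> row_len mu 1 \<le> a \<and> row_len mu 1 \<le> b then 1 else 0)"
proof -
  have "tableaux mu (partition_exp [a, b]) =
        (if length mu \<le> 2 \<and> row_len mu 1 \<le> a \<and> row_len mu 1 \<le> b then {two_row_tableau mu a} else {})"
  proof (cases "length mu \<le> 2 \<and> row_len mu 1 \<le> a \<and> row_len mu 1 \<le> b")
    case True
    then have "tableaux mu (partition_exp [a, b]) = {two_row_tableau mu a}"
      using tableaux_two_rows_unique(1)[OF assms] two_row_tableau_mem_tableaux[OF assms] by blast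
    with True show ?thesis
      by simp
  next
    case False
    then have "tableaux mu (partition_exp [a, b]) = {}"
      using tableaux_two_rows_unique(2-4)[OF assms] by blast
    with False show ?thesis
      by simp
  qed
  then show ?thesis
    by (simp add: kostka_eq_card_tableaux)
qed

lemma kostka_two_rows_diff:
  assumes p: "is_partition mu" and s: "sum_list mu = a + b" and "1 \<le> b" and "b \<le> a"
  shows "int (kostka mu (partition_exp [a, b])) - int (kostka mu (partition_exp [Suc a, b - 1])) =
         (if mu = [a, b] then 1 else 0)"
proof -
  have s': "sum_list mu = Suc a + (b - 1)"
    using s \<open>1 \<le> b\<close> by simp
  have "length mu \<le> 2 \<and> row_len mu 1 = b \<longleftrightarrow> mu = [a, b]"
  proof
    assume mu: "length mu \<le> 2 \<and> row_len mu 1 = b"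
    then have "length mu = 2"
      using row_len_pos_iff[OF p, of 1] \<open>1 \<le> b\<close> by simp
    moreover have "row_len mu 0 = a"
      using sum_list_two_rows mu s by simp
    ultimately show "mu = [a, b]"
      using mu by (auto simp: row_len_def numeral_2_eq_2 length_Suc_conv)
  qed (simp add: row_len_def)
  then show ?thesis
    using kostka_two_rows[OF p s] kostka_two_rows[OF p s'] assms by auto
qed

lemma schur_coeff_two_rows:
  assumes f: "symmetric_coeffs f" and "1 \<le> b" and "b \<le> a"
  shows "schur_coeff f [a, b] = f (partition_exp [a, b]) - f (partition_exp [Suc a, b - 1])"
proof -
  define P where "P = {mu. is_partition mu \<and> sum_list mu = a + b}"
  have exp: "f (partition_exp la) = (\<Sum>mu\<in>P. schur_coeff f mu * int (kostka mu (partition_exp la)))"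
    if "sum_list la = a + b" for la
    using schur_expansion_schur_coeff[OF f] partition_exp_mem_monomials[of la] that
    by (simp add: schur_expansion_def mdeg_partition_exp P_def)
  have "f (partition_exp [a, b]) - f (partition_exp [Suc a, b - 1]) =
        (\<Sum>mu\<in>P. schur_coeff f mu *
           (int (kostka mu (partition_exp [a, b])) - int (kostka mu (partition_exp [Suc a, b - 1]))))"
    using exp[of "[a, b]"] exp[of "[Suc a, b - 1]"] \<open>1 \<le> b\<close> by (simp add: sum_subtractf algebra_simps)
  also have "\<dots> = (\<Sum>mu\<in>P. if mu = [a, b] then schur_coeff f mu else 0)"
    using kostka_two_rows_diff assms by (intro sum.cong) (auto simp: P_def)
  also have "\<dots> = schur_coeff f [a, b]"
    using assms finite_partitions by (simp add: P_def is_partition_def)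
  finally show ?thesis
    by simp
qed

section \<open>Colourings with two colours\<close>

text \<open>The colourings counted by \<open>X\<^sub>G\<^sup>\<alpha>\<close> that use only the colours \<open>1\<close> and \<open>2\<close> and avoid the
  colours \<open>F v\<close> at \<open>v\<close>, weighted by the number of vertices coloured \<open>1\<close>. The forbidden
  sets \<open>F\<close> record the colours of neighbours that have already been removed.\<close>

definition colour_choices :: "nat \<Rightarrow> nat set \<Rightarrow> nat set set" where
  "colour_choices m G = {S. S \<subseteq> {1, 2} \<and> card S = m \<and> S \<inter> G = {}}"

definition colourings12 ::
  "'v set \<Rightarrow> ('v \<Rightarrow> 'v \<Rightarrow> bool) \<Rightarrow> ('v \<Rightarrow> nat) \<Rightarrow> ('v \<Rightarrow> nat set) \<Rightarrow> ('v \<Rightarrow> nat set) set" where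
  "colourings12 V E \<alpha> F = {\<kappa>. (\<forall>v\<in>V. \<kappa> v \<in> colour_choices (\<alpha> v) (F v)) \<and> (\<forall>v. v \<notin> V \<longrightarrow> \<kappa> v = {}) \<and>
      (\<forall>u\<in>V. \<forall>v\<in>V. E u v \<longrightarrow> \<kappa> u \<inter> \<kappa> v = {})}"

definition colour_count :: "nat \<Rightarrow> 'v set \<Rightarrow> ('v \<Rightarrow> nat set) \<Rightarrow> nat" where
  "colour_count i V \<kappa> = card {v \<in> V. i \<in> \<kappa> v}"

definition colour_poly ::
  "'v set \<Rightarrow> ('v \<Rightarrow> 'v \<Rightarrow> bool) \<Rightarrow> ('v \<Rightarrow> nat) \<Rightarrow> ('v \<Rightarrow> nat set) \<Rightarrow> int poly" where
  "colour_poly V E \<alpha> F = (\<Sum>\<kappa>\<in>colourings12 V E \<alpha> F. monom 1 (colour_count 1 V \<kappa>))"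

lemma finite_colour_choices: "finite (colour_choices m G)"
  by (rule finite_subset[of _ "Pow {1, 2}"]) (auto simp: colour_choices_def)

lemma finite_colourings12:
  assumes "finite V"
  shows "finite (colourings12 V E \<alpha> F)"
proof (rule finite_subset)
  show "colourings12 V E \<alpha> F \<subseteq> (\<lambda>f v. if v \<in> V then f v else {}) ` PiE V (\<lambda>_. Pow {1::nat, 2})"
  proof
    fix \<kappa> assume \<kappa>: "\<kappa> \<in> colourings12 V E \<alpha> F"
    then have "restrict \<kappa> V \<in> PiE V (\<lambda>_. Pow {1, 2})"
      by (auto simp: colourings12_def colour_choices_def restrict_PiE_iff)
    moreover have "\<kappa> = (\<lambda>v. if v \<in> V then restrict \<kappa> V v else {})"
      using \<kappa> by (auto simp: colourings12_def fun_eq_iff)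
    ultimately show "\<kappa> \<in> (\<lambda>f v. if v \<in> V then f v else {}) ` PiE V (\<lambda>_. Pow {1, 2})"
      by blast
  qed
  show "finite ((\<lambda>f v. if v \<in> V then f v else {}) ` PiE V (\<lambda>_. Pow {1::nat, 2}))"
    using assms by (simp add: finite_PiE)
qed

lemma colour_poly_empty: "colour_poly {} E \<alpha> F = 1"
proof -
  have "colourings12 {} E \<alpha> F = {\<lambda>_. {}}"
    by (auto simp: colourings12_def)
  then show ?thesis
    by (simp add: colour_poly_def colour_count_def)
qed

lemma coeff_colour_poly:
  assumes "finite V"
  shows "coeff (colour_poly V E \<alpha> F) x = int (card {\<kappa> \<in> colourings12 V E \<alpha> F. colour_count 1 V \<kappa> = x})"
  using finite_colourings12[OF assms]
  by (simp add: colour_poly_def coeff_sum coeff_monom sum.If_cases Int_def conj_commute)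

lemma glue_mem_colourings12:
  assumes \<kappa>1: "\<kappa>1 \<in> colourings12 V E \<alpha> F" and \<kappa>2: "\<kappa>2 \<in> colourings12 W E \<alpha> F"
    and VW: "V \<inter> W = {}" and noE: "\<And>u w. u \<in> V \<Longrightarrow> w \<in> W \<Longrightarrow> \<not> E u w \<and> \<not> E w u"
  shows "(\<lambda>v. if v \<in> V then \<kappa>1 v else \<kappa>2 v) \<in> colourings12 (V \<union> W) E \<alpha> F"
  unfolding colourings12_def
proof (intro CollectI conjI ballI allI impI)
  fix u v assume uv: "u \<in> V \<union> W" "v \<in> V \<union> W" "E u v"
  then have same: "u \<in> V \<longleftrightarrow> v \<in> V"
    using noE[of u v] noE[of v u] by blast
  show "(if u \<in> V then \<kappa>1 u else \<kappa>2 u) \<inter> (if v \<in> V then \<kappa>1 v else \<kappa>2 v) = {}"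
  proof (cases "u \<in> V")
    case True
    then have "\<kappa>1 u \<inter> \<kappa>1 v = {}"
      using \<kappa>1 uv same unfolding colourings12_def by blast
    with True same show ?thesis
      by simp
  next
    case False
    then have "\<kappa>2 u \<inter> \<kappa>2 v = {}"
      using \<kappa>2 uv same unfolding colourings12_def by blast
    with False same show ?thesis
      by simp
  qed
qed (use \<kappa>1 \<kappa>2 VW in \<open>auto simp: colourings12_def\<close>)

lemma colourings12_Un:
  assumes VW: "V \<inter> W = {}" and noE: "\<And>u w. u \<in> V \<Longrightarrow> w \<in> W \<Longrightarrow> \<not> E u w \<and> \<not> E w u"
  shows "bij_betw (\<lambda>\<kappa>. (\<lambda>v. if v \<in> V then \<kappa> v else {}, \<lambda>v. if v \<in> W then \<kappa> v else {}))
           (colourings12 (V \<union> W) E \<alpha> F) (colourings12 V E \<alpha> F \<times> colourings12 W E \<alpha> F)"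
proof (rule bij_betw_byWitness[where f' = "\<lambda>(\<kappa>1, \<kappa>2) v. if v \<in> V then \<kappa>1 v else \<kappa>2 v"])
  show "(\<lambda>\<kappa>. (\<lambda>v. if v \<in> V then \<kappa> v else {}, \<lambda>v. if v \<in> W then \<kappa> v else {})) ` colourings12 (V \<union> W) E \<alpha> F
          \<subseteq> colourings12 V E \<alpha> F \<times> colourings12 W E \<alpha> F"
  proof (rule image_subsetI)
    fix \<kappa> assume \<kappa>: "\<kappa> \<in> colourings12 (V \<union> W) E \<alpha> F"
    then have "\<kappa> u \<inter> \<kappa> v = {}" if "u \<in> V \<union> W" "v \<in> V \<union> W" "E u v" for u v
      using that unfolding colourings12_def by blast
    with \<kappa> show "(\<lambda>v. if v \<in> V then \<kappa> v else {}, \<lambda>v. if v \<in> W then \<kappa> v else {})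
                     \<in> colourings12 V E \<alpha> F \<times> colourings12 W E \<alpha> F"
      by (auto simp: colourings12_def)
  qed
  show "(\<lambda>(\<kappa>1, \<kappa>2) v. if v \<in> V then \<kappa>1 v else \<kappa>2 v) ` (colourings12 V E \<alpha> F \<times> colourings12 W E \<alpha> F)
          \<subseteq> colourings12 (V \<union> W) E \<alpha> F"
    using glue_mem_colourings12[OF _ _ VW noE] by auto
  show "\<forall>\<kappa>\<in>colourings12 (V \<union> W) E \<alpha> F.
          (\<lambda>(\<kappa>1, \<kappa>2) v. if v \<in> V then \<kappa>1 v else \<kappa>2 v) (\<lambda>v. if v \<in> V then \<kappa> v else {}, \<lambda>v. if v \<in> W then \<kappa> v else {}) = \<kappa>"
    by (auto simp: colourings12_def fun_eq_iff)
  show "\<forall>p\<in>colourings12 V E \<alpha> F \<times> colourings12 W E \<alpha> F.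
          (\<lambda>\<kappa>. (\<lambda>v. if v \<in> V then \<kappa> v else {}, \<lambda>v. if v \<in> W then \<kappa> v else {}))
            ((\<lambda>(\<kappa>1, \<kappa>2) v. if v \<in> V then \<kappa>1 v else \<kappa>2 v) p) = p"
    using VW by (auto simp: colourings12_def fun_eq_iff)
qed

lemma colour_poly_Un:
  assumes fin: "finite V" "finite W" and VW: "V \<inter> W = {}"
    and noE: "\<And>u w. u \<in> V \<Longrightarrow> w \<in> W \<Longrightarrow> \<not> E u w \<and> \<not> E w u"
  shows "colour_poly (V \<union> W) E \<alpha> F = colour_poly V E \<alpha> F * colour_poly W E \<alpha> F"
proof -
  have count: "colour_count 1 (V \<union> W) \<kappa> =
      colour_count 1 V (\<lambda>v. if v \<in> V then \<kappa> v else {}) + colour_count 1 W (\<lambda>v. if v \<in> W then \<kappa> v else {})" for \<kappa>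
  proof -
    have "colour_count 1 V (\<lambda>v. if v \<in> V then \<kappa> v else {}) = card {v \<in> V. 1 \<in> \<kappa> v}"
      and "colour_count 1 W (\<lambda>v. if v \<in> W then \<kappa> v else {}) = card {v \<in> W. 1 \<in> \<kappa> v}"
      unfolding colour_count_def by (rule arg_cong[where f = card], auto)+
    moreover have "colour_count 1 (V \<union> W) \<kappa> = card ({v \<in> V. 1 \<in> \<kappa> v} \<union> {v \<in> W. 1 \<in> \<kappa> v})"
      unfolding colour_count_def by (rule arg_cong[where f = card]) auto
    moreover have "card ({v \<in> V. 1 \<in> \<kappa> v} \<union> {v \<in> W. 1 \<in> \<kappa> v}) = card {v \<in> V. 1 \<in> \<kappa> v} + card {v \<in> W. 1 \<in> \<kappa> v}"
      by (rule card_Un_disjoint) (use fin VW in auto)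
    ultimately show ?thesis
      by simp
  qed
  let ?g = "\<lambda>p. monom (1::int) (colour_count 1 V (fst p) + colour_count 1 W (snd p))"
  let ?h = "\<lambda>\<kappa>. (\<lambda>v. if v \<in> V then \<kappa> v else {}, \<lambda>v. if v \<in> W then \<kappa> v else {})"
  have "colour_poly (V \<union> W) E \<alpha> F = (\<Sum>\<kappa>\<in>colourings12 (V \<union> W) E \<alpha> F. ?g (?h \<kappa>))"
    unfolding colour_poly_def count by simp
  also have "\<dots> = (\<Sum>p\<in>colourings12 V E \<alpha> F \<times> colourings12 W E \<alpha> F. ?g p)"
    by (rule sum.reindex_bij_betw[OF colourings12_Un[OF VW noE]])
  also have "\<dots> = colour_poly V E \<alpha> F * colour_poly W E \<alpha> F"
    by (simp add: colour_poly_def sum_product sum.cartesian_product mult_monom case_prod_unfold)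
  finally show ?thesis .
qed

definition forbid_at_nbrs :: "('v \<Rightarrow> 'v \<Rightarrow> bool) \<Rightarrow> 'v \<Rightarrow> nat set \<Rightarrow> ('v \<Rightarrow> nat set) \<Rightarrow> 'v \<Rightarrow> nat set" where
  "forbid_at_nbrs E x S F = (\<lambda>v. F v \<union> (if E x v \<or> E v x then S else {}))"

lemma fun_upd_mem_colourings12:
  assumes \<kappa>: "\<kappa> \<in> colourings12 (V - {x}) E \<alpha> (forbid_at_nbrs E x S F)"
    and x: "x \<in> V" and nx: "\<not> E x x" and S: "S \<in> colour_choices (\<alpha> x) (F x)"
  shows "\<kappa>(x := S) \<in> colourings12 V E \<alpha> F"
proof -
  have avoid: "\<kappa> v \<inter> S = {}" if "v \<in> V - {x}" and "E x v \<or> E v x" for v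
  proof -
    have "\<kappa> v \<in> colour_choices (\<alpha> v) (forbid_at_nbrs E x S F v)"
      using \<kappa> that(1) by (simp add: colourings12_def)
    then show ?thesis
      using that(2) by (auto simp: colour_choices_def forbid_at_nbrs_def)
  qed
  show ?thesis
    unfolding colourings12_def
  proof (intro CollectI conjI ballI allI impI)
    fix v assume "v \<in> V"
    then show "(\<kappa>(x := S)) v \<in> colour_choices (\<alpha> v) (F v)"
      using \<kappa> S by (auto simp: colourings12_def colour_choices_def forbid_at_nbrs_def)
  next
    fix v assume "v \<notin> V"
    then show "(\<kappa>(x := S)) v = {}"
      using \<kappa> x unfolding colourings12_def by auto
  next
    fix u v assume "u \<in> V" "v \<in> V" "E u v"
    then show "(\<kappa>(x := S)) u \<inter> (\<kappa>(x := S)) v = {}"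
      using \<kappa> avoid[of u] avoid[of v] nx unfolding colourings12_def by auto
  qed
qed

lemma colourings12_remove_vertex:
  assumes x: "x \<in> V" and nx: "\<not> E x x" and S: "S \<in> colour_choices (\<alpha> x) (F x)"
  shows "bij_betw (\<lambda>\<kappa>. \<kappa>(x := {})) {\<kappa> \<in> colourings12 V E \<alpha> F. \<kappa> x = S}
           (colourings12 (V - {x}) E \<alpha> (forbid_at_nbrs E x S F))"
proof (rule bij_betw_byWitness[where f' = "\<lambda>\<kappa>. \<kappa>(x := S)"])
  show "(\<lambda>\<kappa>. \<kappa>(x := {})) ` {\<kappa> \<in> colourings12 V E \<alpha> F. \<kappa> x = S} \<subseteq> colourings12 (V - {x}) E \<alpha> (forbid_at_nbrs E x S F)"
  proof
    fix \<kappa>' assume "\<kappa>' \<in> (\<lambda>\<kappa>. \<kappa>(x := {})) ` {\<kappa> \<in> colourings12 V E \<alpha> F. \<kappa> x = S}"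
    then obtain \<kappa> where \<kappa>: "\<kappa> \<in> colourings12 V E \<alpha> F" and Sx: "\<kappa> x = S" and \<kappa>': "\<kappa>' = \<kappa>(x := {})"
      by blast
    have "\<kappa> v \<inter> S = {}" if "v \<in> V - {x}" and "E x v \<or> E v x" for v
      using \<kappa> Sx that x unfolding colourings12_def by blast
    with \<kappa> show "\<kappa>' \<in> colourings12 (V - {x}) E \<alpha> (forbid_at_nbrs E x S F)"
      unfolding \<kappa>' by (auto simp: colourings12_def colour_choices_def forbid_at_nbrs_def)
  qed
  show "(\<lambda>\<kappa>. \<kappa>(x := S)) ` colourings12 (V - {x}) E \<alpha> (forbid_at_nbrs E x S F) \<subseteq> {\<kappa> \<in> colourings12 V E \<alpha> F. \<kappa> x = S}"
    using fun_upd_mem_colourings12[of _ V x E \<alpha> S F, OF _ x nx S] by auto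
  show "\<forall>\<kappa>\<in>{\<kappa> \<in> colourings12 V E \<alpha> F. \<kappa> x = S}. (\<kappa>(x := {}))(x := S) = \<kappa>"
    by auto
  show "\<forall>\<kappa>\<in>colourings12 (V - {x}) E \<alpha> (forbid_at_nbrs E x S F). (\<kappa>(x := S))(x := {}) = \<kappa>"
    by (auto simp: colourings12_def fun_eq_iff)
qed

lemma colour_count_remove_vertex:
  assumes "finite V" and "x \<in> V"
  shows "colour_count i V \<kappa> = (if i \<in> \<kappa> x then 1 else 0) + colour_count i (V - {x}) (\<kappa>(x := {}))"
proof -
  have "{v \<in> V. i \<in> \<kappa> v} = (if i \<in> \<kappa> x then {x} else {}) \<union> {v \<in> V - {x}. i \<in> (\<kappa>(x := {})) v}"
    using assms by auto
  then show ?thesis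
    using assms by (simp add: colour_count_def card_insert_if)
qed

lemma colour_poly_remove_vertex:
  assumes fin: "finite V" and x: "x \<in> V" and nx: "\<not> E x x"
  shows "colour_poly V E \<alpha> F = (\<Sum>S\<in>colour_choices (\<alpha> x) (F x).
           monom 1 (if 1 \<in> S then 1 else 0) * colour_poly (V - {x}) E \<alpha> (forbid_at_nbrs E x S F))"
proof -
  have "colour_poly V E \<alpha> F =
        (\<Sum>S\<in>colour_choices (\<alpha> x) (F x). \<Sum>\<kappa>\<in>{\<kappa> \<in> colourings12 V E \<alpha> F. \<kappa> x = S}. monom 1 (colour_count 1 V \<kappa>))"
    unfolding colour_poly_def
    by (rule sum.group[symmetric]) (use fin x finite_colourings12 finite_colour_choices in \<open>auto simp: colourings12_def\<close>)
  also have "\<dots> = (\<Sum>S\<in>colour_choices (\<alpha> x) (F x).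
           monom 1 (if 1 \<in> S then 1 else 0) * colour_poly (V - {x}) E \<alpha> (forbid_at_nbrs E x S F))"
  proof (rule sum.cong[OF refl])
    fix S assume S: "S \<in> colour_choices (\<alpha> x) (F x)"
    have "(\<Sum>\<kappa>\<in>{\<kappa> \<in> colourings12 V E \<alpha> F. \<kappa> x = S}. monom 1 (colour_count 1 V \<kappa>)) =
          (\<Sum>\<kappa>\<in>{\<kappa> \<in> colourings12 V E \<alpha> F. \<kappa> x = S}.
             monom 1 (if 1 \<in> S then 1 else 0) * monom (1::int) (colour_count 1 (V - {x}) (\<kappa>(x := {}))))"
      using colour_count_remove_vertex[OF fin x] by (intro sum.cong) (auto simp: mult_monom)
    also have "\<dots> = monom 1 (if 1 \<in> S then 1 else 0) * colour_poly (V - {x}) E \<alpha> (forbid_at_nbrs E x S F)"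
      unfolding colour_poly_def sum_distrib_left
      by (rule sum.reindex_bij_betw[OF colourings12_remove_vertex[of x V E S \<alpha> F, OF x nx S]])
    finally show "(\<Sum>\<kappa>\<in>{\<kappa> \<in> colourings12 V E \<alpha> F. \<kappa> x = S}. monom 1 (colour_count 1 V \<kappa>)) =
          monom 1 (if 1 \<in> S then 1 else 0) * colour_poly (V - {x}) E \<alpha> (forbid_at_nbrs E x S F)" .
  qed
  finally show ?thesis .
qed

lemma colour_poly_inj_image:
  assumes inj: "inj_on f V" and adj: "\<And>u v. u \<in> V \<Longrightarrow> v \<in> V \<Longrightarrow> E' (f u) (f v) = E u v"
  shows "colour_poly (f ` V) E' \<alpha> F = colour_poly V E (\<alpha> \<circ> f) (F \<circ> f)"
proof -
  let ?pull = "\<lambda>\<kappa> v. if v \<in> V then \<kappa> (f v) else {}"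
  let ?push = "\<lambda>\<kappa> w. if w \<in> f ` V then \<kappa> (inv_into V f w) else {}"
  have "bij_betw ?pull (colourings12 (f ` V) E' \<alpha> F) (colourings12 V E (\<alpha> \<circ> f) (F \<circ> f))"
  proof (rule bij_betw_byWitness[where f' = ?push])
    show "?pull ` colourings12 (f ` V) E' \<alpha> F \<subseteq> colourings12 V E (\<alpha> \<circ> f) (F \<circ> f)"
    proof clarify
      fix \<kappa> assume \<kappa>: "\<kappa> \<in> colourings12 (f ` V) E' \<alpha> F"
      then have "\<kappa> (f u) \<inter> \<kappa> (f v) = {}" if "u \<in> V" "v \<in> V" "E u v" for u v
        using that adj[of u v] unfolding colourings12_def by blast
      with \<kappa> show "?pull \<kappa> \<in> colourings12 V E (\<alpha> \<circ> f) (F \<circ> f)"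
        by (auto simp: colourings12_def)
    qed
    show "?push ` colourings12 V E (\<alpha> \<circ> f) (F \<circ> f) \<subseteq> colourings12 (f ` V) E' \<alpha> F"
    proof clarify
      fix \<kappa> assume \<kappa>: "\<kappa> \<in> colourings12 V E (\<alpha> \<circ> f) (F \<circ> f)"
      have "\<kappa> u \<inter> \<kappa> v = {}" if "u \<in> V" "v \<in> V" "E' (f u) (f v)" for u v
        using \<kappa> that adj[of u v] unfolding colourings12_def by blast
      with \<kappa> inj show "?push \<kappa> \<in> colourings12 (f ` V) E' \<alpha> F"
        by (auto simp: colourings12_def)
    qed
  qed (use inj in \<open>auto simp: colourings12_def fun_eq_iff\<close>)
  moreover have "colour_count 1 (f ` V) \<kappa> = colour_count 1 V (?pull \<kappa>)" for \<kappa>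
  proof -
    have "{w \<in> f ` V. 1 \<in> \<kappa> w} = f ` {v \<in> V. 1 \<in> ?pull \<kappa> v}"
      by auto
    then show ?thesis
      using inj by (simp add: colour_count_def card_image inj_on_subset)
  qed
  ultimately show ?thesis
    unfolding colour_poly_def by (simp add: sum.reindex_bij_betw[symmetric])
qed

section \<open>Symmetry of \<open>X\<^sub>G\<^sup>\<alpha>\<close> and its two-variable part\<close>

definition Xcolourings :: "'v set \<Rightarrow> ('v \<Rightarrow> 'v \<Rightarrow> bool) \<Rightarrow> ('v \<Rightarrow> nat) \<Rightarrow> (nat \<Rightarrow> nat) \<Rightarrow> ('v \<Rightarrow> nat set) set" where
  "Xcolourings V E \<alpha> e = {\<kappa> \<in> colourings V E \<alpha>. \<forall>i. card {v \<in> V. i \<in> \<kappa> v} = e i}"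

lemma Xcoef_eq_card: "Xcoef V E \<alpha> e = int (card (Xcolourings V E \<alpha> e))"
  by (simp add: Xcoef_def Xcolourings_def)

lemma mem_transpose_image_iff: "j \<in> transpose a b ` A \<longleftrightarrow> transpose a b j \<in> A"
  by (metis image_iff transpose_involutory)

lemma transpose_image_mem_Xcolourings:
  assumes i: "1 \<le> i" and \<kappa>: "\<kappa> \<in> Xcolourings V E \<alpha> e"
  shows "(\<lambda>v. transpose i (Suc i) ` \<kappa> v) \<in> Xcolourings V E \<alpha> (e \<circ> transpose i (Suc i))"
proof -
  have col: "\<kappa> \<in> colourings V E \<alpha>" and cnt: "\<And>j. card {v \<in> V. j \<in> \<kappa> v} = e j"
    using \<kappa> by (auto simp: Xcolourings_def)
  have "transpose i (Suc i) 0 = 0"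
    using i by simp
  then have "(\<lambda>v. transpose i (Suc i) ` \<kappa> v) \<in> colourings V E \<alpha>"
    using col by (auto simp: colourings_def mem_transpose_image_iff card_image image_Int[symmetric])
  moreover have "card {v \<in> V. j \<in> transpose i (Suc i) ` \<kappa> v} = (e \<circ> transpose i (Suc i)) j" for j
    using cnt[of "transpose i (Suc i) j"] by (simp add: mem_transpose_image_iff)
  ultimately show ?thesis
    by (simp add: Xcolourings_def)
qed

lemma Xcoef_transpose:
  assumes "1 \<le> i"
  shows "Xcoef V E \<alpha> (e \<circ> transpose i (Suc i)) = Xcoef V E \<alpha> e"
proof -
  let ?\<tau> = "\<lambda>\<kappa> v. transpose i (Suc i) ` \<kappa> v"
  have "bij_betw ?\<tau> (Xcolourings V E \<alpha> e) (Xcolourings V E \<alpha> (e \<circ> transpose i (Suc i)))"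
  proof (rule bij_betw_byWitness[where f' = ?\<tau>])
    show "?\<tau> ` Xcolourings V E \<alpha> (e \<circ> transpose i (Suc i)) \<subseteq> Xcolourings V E \<alpha> e"
      using transpose_image_mem_Xcolourings[OF assms, of _ V E \<alpha> "e \<circ> transpose i (Suc i)"]
      by (auto simp: comp_assoc)
  qed (auto simp: image_image transpose_image_mem_Xcolourings[OF assms])
  then show ?thesis
    unfolding Xcoef_eq_card by (simp add: bij_betw_same_card)
qed

lemma symmetric_coeffs_Xcoef: "symmetric_coeffs (Xcoef V E \<alpha>)"
  by (simp add: symmetric_coeffs_def Xcoef_transpose)

lemma symmetric_coeffs_add: "symmetric_coeffs f \<Longrightarrow> symmetric_coeffs g \<Longrightarrow> symmetric_coeffs (\<lambda>e. f e + g e)"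
  by (simp add: symmetric_coeffs_def)

lemma card_subset_one_two:
  assumes "A \<subseteq> {1, 2 :: nat}"
  shows "card A = (if 1 \<in> A then 1 else 0) + (if 2 \<in> A then 1 else 0)"
proof (cases "1 \<in> A"; cases "2 \<in> A")
  assume "1 \<in> A" "2 \<in> A"
  with assms have "A = {1, 2}"
    by auto
  then show ?thesis
    by simp
next
  assume "1 \<in> A" "2 \<notin> A"
  with assms have "A = {1}"
    by auto
  then show ?thesis
    by simp
next
  assume "1 \<notin> A" "2 \<in> A"
  with assms have "A = {2}"
    by auto
  then show ?thesis
    by simp
next
  assume "1 \<notin> A" "2 \<notin> A"
  with assms have "A = {}"
    by auto
  then show ?thesis
    by simp
qed

lemma colour_count_1_plus_2:
  assumes "finite V" and "\<kappa> \<in> colourings12 V E \<alpha> F"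
  shows "colour_count 1 V \<kappa> + colour_count 2 V \<kappa> = (\<Sum>v\<in>V. \<alpha> v)"
proof -
  have "\<alpha> v = (if 1 \<in> \<kappa> v then 1 else 0) + (if 2 \<in> \<kappa> v then 1 else 0)" if "v \<in> V" for v
    using assms(2) that card_subset_one_two[of "\<kappa> v"] by (auto simp: colourings12_def colour_choices_def)
  then show ?thesis
    using assms(1) by (simp add: colour_count_def sum.distrib sum.If_cases Int_def conj_commute)
qed

lemma Xcolourings_two_rows:
  assumes "finite V"
  shows "Xcolourings V E \<alpha> (partition_exp [x, y]) =
         {\<kappa> \<in> colourings12 V E \<alpha> (\<lambda>_. {}). colour_count 1 V \<kappa> = x \<and> colour_count 2 V \<kappa> = y}"
proof (intro set_eqI iffI)
  fix \<kappa> assume \<kappa>: "\<kappa> \<in> Xcolourings V E \<alpha> (partition_exp [x, y])"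
  then have col: "\<kappa> \<in> colourings V E \<alpha>" and cnt: "\<And>j. card {v \<in> V. j \<in> \<kappa> v} = partition_exp [x, y] j"
    by (auto simp: Xcolourings_def)
  have "\<kappa> v \<subseteq> {1, 2}" if "v \<in> V" for v
  proof
    fix j assume j: "j \<in> \<kappa> v"
    then have "card {v \<in> V. j \<in> \<kappa> v} \<noteq> 0"
      using assms that by (auto simp: card_eq_0_iff)
    then show "j \<in> {1, 2}"
      using cnt[of j] by (auto simp: partition_exp_two_rows split: if_splits)
  qed
  with col cnt[of 1] cnt[of 2] show "\<kappa> \<in> {\<kappa> \<in> colourings12 V E \<alpha> (\<lambda>_. {}). colour_count 1 V \<kappa> = x \<and> colour_count 2 V \<kappa> = y}"
    by (auto simp: colourings_def colourings12_def colour_choices_def colour_count_def partition_exp_def row_len_def)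
next
  fix \<kappa> assume \<kappa>: "\<kappa> \<in> {\<kappa> \<in> colourings12 V E \<alpha> (\<lambda>_. {}). colour_count 1 V \<kappa> = x \<and> colour_count 2 V \<kappa> = y}"
  then have sub: "\<And>v. v \<in> V \<Longrightarrow> \<kappa> v \<subseteq> {1, 2}"
    by (auto simp: colourings12_def colour_choices_def)
  have "\<kappa> \<in> colourings V E \<alpha>"
    unfolding colourings_def
  proof (intro CollectI conjI ballI allI impI)
    fix v assume v: "v \<in> V"
    show "finite (\<kappa> v)"
      by (rule finite_subset[OF sub[OF v]]) simp
    show "0 \<notin> \<kappa> v"
      using sub[OF v] by auto
    show "card (\<kappa> v) = \<alpha> v"
      using \<kappa> v by (simp add: colourings12_def colour_choices_def)
  qed (use \<kappa> in \<open>simp_all add: colourings12_def\<close>)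
  moreover have "card {v \<in> V. j \<in> \<kappa> v} = partition_exp [x, y] j" for j
  proof (cases "j = 1 \<or> j = 2")
    case False
    then have empty: "{v \<in> V. j \<in> \<kappa> v} = {}"
      using sub by blast
    show ?thesis
      unfolding empty using False by (simp add: partition_exp_two_rows)
  qed (use \<kappa> in \<open>auto simp: colour_count_def partition_exp_two_rows\<close>)
  ultimately show "\<kappa> \<in> Xcolourings V E \<alpha> (partition_exp [x, y])"
    by (simp add: Xcolourings_def)
qed

lemma Xcoef_two_rows:
  assumes "finite V"
  shows "Xcoef V E \<alpha> (partition_exp [x, y]) =
         (if x + y = (\<Sum>v\<in>V. \<alpha> v) then coeff (colour_poly V E \<alpha> (\<lambda>_. {})) x else 0)"
proof (cases "x + y = (\<Sum>v\<in>V. \<alpha> v)")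
  case True
  have "{\<kappa> \<in> colourings12 V E \<alpha> (\<lambda>_. {}). colour_count 1 V \<kappa> = x \<and> colour_count 2 V \<kappa> = y} =
        {\<kappa> \<in> colourings12 V E \<alpha> (\<lambda>_. {}). colour_count 1 V \<kappa> = x}"
    using colour_count_1_plus_2[OF assms, of _ E \<alpha> "\<lambda>_. {}"] True by force
  with True show ?thesis
    unfolding Xcoef_eq_card Xcolourings_two_rows[OF assms] coeff_colour_poly[OF assms] by simp
next
  case False
  then have empty: "{\<kappa> \<in> colourings12 V E \<alpha> (\<lambda>_. {}). colour_count 1 V \<kappa> = x \<and> colour_count 2 V \<kappa> = y} = {}"
    using colour_count_1_plus_2[OF assms, of _ E \<alpha> "\<lambda>_. {}"] by force
  show ?thesis
    unfolding Xcoef_eq_card Xcolourings_two_rows[OF assms] empty using False by simp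
qed

section \<open>Spiders and forests\<close>

lemma colour_choices_eq_filter:
  "colour_choices m G = set (filter (\<lambda>S. card S = m \<and> S \<inter> G = {}) [{}, {1}, {2}, {1, 2}])"
proof -
  have "Pow {1::nat, 2} = set [{}, {1}, {2}, {1, 2}]"
    by (auto simp: Pow_insert)
  then show ?thesis
    unfolding colour_choices_def set_filter by (metis Pow_iff)
qed

lemma sum_colour_choices:
  "sum f (colour_choices m G) =
     sum_list (map f (filter (\<lambda>S. card S = m \<and> S \<inter> G = {}) [{}, {1}, {2}, {1, 2}]))"
proof -
  have "distinct (filter (\<lambda>S. card S = m \<and> S \<inter> G = {}) [{}, {1::nat}, {2}, {1, 2}])"
    by (intro distinct_filter) simp
  then show ?thesis
    unfolding colour_choices_eq_filter by (rule sum.distinct_set_conv_list)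
qed

text \<open>The two-colour polynomial of a leg whose inner vertex (weight \<open>a1\<close>) must avoid the torso
  colours \<open>T\<close> and whose outer vertex has weight \<open>a2\<close>.\<close>

definition leg_poly :: "nat \<Rightarrow> nat \<Rightarrow> nat set \<Rightarrow> int poly" where
  "leg_poly a1 a2 T = (\<Sum>S\<in>colour_choices a1 T. monom 1 (if 1 \<in> S then 1 else 0) *
                        (\<Sum>S'\<in>colour_choices a2 S. monom 1 (if 1 \<in> S' then 1 else 0)))"

lemma x_plus_1: "[:0, 1:] + 1 = ([:1, 1:] :: int poly)"
  by (simp add: one_pCons)

lemma leg_poly_1_0:
  "leg_poly (Suc 0) 0 {Suc 0} = 1" "leg_poly (Suc 0) 0 {2} = monom 1 1" "leg_poly (Suc 0) 0 {} = [:1, 1:]"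
  by (simp_all add: leg_poly_def sum_colour_choices monom_altdef x_plus_1)

lemma leg_poly_2_0: "leg_poly 2 0 {} = monom 1 1"
  by (simp add: leg_poly_def sum_colour_choices)

lemma leg_poly_other:
  assumes "a1 \<le> 1" and "a1 + a2 \<le> 2" and "\<not> (a1 = 1 \<and> a2 = 0)"
  shows "leg_poly a1 a2 {2} = leg_poly a1 a2 {1}"
    and "leg_poly a1 a2 {} = smult (if a1 = 1 then 2 else 1) (leg_poly a1 a2 {1})"
    and "sym_unimodal (a1 + a2) (leg_poly a1 a2 {1})"
proof -
  consider "a1 = 0" "a2 = 0" | "a1 = 0" "a2 = 1" | "a1 = 0" "a2 = 2" | "a1 = 1" "a2 = 1"
    using assms by linarith
  then have "leg_poly a1 a2 {2} = leg_poly a1 a2 {1} \<and>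
      leg_poly a1 a2 {} = smult (if a1 = 1 then 2 else 1) (leg_poly a1 a2 {1}) \<and>
      sym_unimodal (a1 + a2) (leg_poly a1 a2 {1})"
  proof cases
    case 1
    then show ?thesis
      by (simp add: leg_poly_def sum_colour_choices sym_unimodal_1)
  next
    case 2
    then show ?thesis
      using sym_unimodal_one_plus_x by (simp add: leg_poly_def sum_colour_choices monom_altdef x_plus_1)
  next
    case 3
    then show ?thesis
      using sym_unimodal_x by (simp add: leg_poly_def sum_colour_choices numeral_2_eq_2)
  next
    case 4
    then show ?thesis
      using sym_unimodal_x by (simp add: leg_poly_def sum_colour_choices smult_monom add_monom numeral_2_eq_2)
  qed
  then show "leg_poly a1 a2 {2} = leg_poly a1 a2 {1}"
    and "leg_poly a1 a2 {} = smult (if a1 = 1 then 2 else 1) (leg_poly a1 a2 {1})"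
    and "sym_unimodal (a1 + a2) (leg_poly a1 a2 {1})"
    by blast+
qed

lemma spider_adj_simps:
  "spider_adj m Torso (Inner j) \<longleftrightarrow> j \<in> {1..m}"
  "spider_adj m (Inner j) Torso \<longleftrightarrow> j \<in> {1..m}"
  "spider_adj m (Inner j) (Outer j') \<longleftrightarrow> j = j' \<and> j \<in> {1..m}"
  "spider_adj m (Outer j') (Inner j) \<longleftrightarrow> j = j' \<and> j \<in> {1..m}"
  "\<not> spider_adj m Torso Torso" "\<not> spider_adj m Torso (Outer j)" "\<not> spider_adj m (Outer j) Torso"
  "\<not> spider_adj m (Inner j) (Inner j')" "\<not> spider_adj m (Outer j) (Outer j')"
  by (auto simp: spider_adj_def)

lemma spider_adj_irrefl: "\<not> spider_adj m u u"
  by (cases u) (auto simp: spider_adj_simps)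

lemma finite_spider_verts: "finite (spider_verts m)"
  by (simp add: spider_verts_def)

lemma sum_spider_verts: "(\<Sum>u\<in>spider_verts m. f u) = f Torso + (\<Sum>j=1..m. f (Inner j) + f (Outer j))"
proof -
  have "spider_verts m = insert Torso (Inner ` {1..m} \<union> Outer ` {1..m})"
    by (auto simp: spider_verts_def)
  then have "(\<Sum>u\<in>spider_verts m. f u) = f Torso + (\<Sum>u\<in>Inner ` {1..m} \<union> Outer ` {1..m}. f u)"
    by (simp only:) (rule sum.insert, auto)
  also have "(\<Sum>u\<in>Inner ` {1..m} \<union> Outer ` {1..m}. f u) = (\<Sum>u\<in>Inner ` {1..m}. f u) + (\<Sum>u\<in>Outer ` {1..m}. f u)"
    by (rule sum.union_disjoint) auto
  finally have "(\<Sum>u\<in>spider_verts m. f u) = f Torso + ((\<Sum>u\<in>Inner ` {1..m}. f u) + (\<Sum>u\<in>Outer ` {1..m}. f u))" .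
  then show ?thesis
    by (simp add: sum.reindex inj_on_def sum.distrib)
qed

definition leg :: "nat \<Rightarrow> spv set" where
  "leg j = {Inner j, Outer j}"

lemma colour_poly_singleton:
  assumes "\<not> E v v"
  shows "colour_poly {v} E \<alpha> F = (\<Sum>S\<in>colour_choices (\<alpha> v) (F v). monom 1 (if 1 \<in> S then 1 else 0))"
  using colour_poly_remove_vertex[of "{v}" v E \<alpha> F] assms by (simp add: colour_poly_empty)

lemma colour_poly_leg:
  assumes j: "j \<in> {1..m}" and "F (Outer j) = {}"
  shows "colour_poly (leg j) (spider_adj m) a F = leg_poly (a (Inner j)) (a (Outer j)) (F (Inner j))"
proof -
  have "colour_poly (leg j) (spider_adj m) a F =
        (\<Sum>S\<in>colour_choices (a (Inner j)) (F (Inner j)). monom 1 (if 1 \<in> S then 1 else 0) *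
           colour_poly (leg j - {Inner j}) (spider_adj m) a (forbid_at_nbrs (spider_adj m) (Inner j) S F))"
    by (rule colour_poly_remove_vertex) (auto simp: leg_def spider_adj_irrefl)
  also have "leg j - {Inner j} = {Outer j}"
    by (auto simp: leg_def)
  also have "(\<Sum>S\<in>colour_choices (a (Inner j)) (F (Inner j)). monom 1 (if 1 \<in> S then 1 else 0) *
           colour_poly {Outer j} (spider_adj m) a (forbid_at_nbrs (spider_adj m) (Inner j) S F)) =
        leg_poly (a (Inner j)) (a (Outer j)) (F (Inner j))"
  proof -
    have "forbid_at_nbrs (spider_adj m) (Inner j) S F (Outer j) = S" for S
      using assms by (simp add: forbid_at_nbrs_def spider_adj_simps)
    then show ?thesis
      by (simp add: colour_poly_singleton spider_adj_irrefl leg_poly_def)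
  qed
  finally show ?thesis .
qed

lemma colour_poly_legs:
  "finite J \<Longrightarrow> colour_poly (\<Union>j\<in>J. leg j) (spider_adj m) a F = (\<Prod>j\<in>J. colour_poly (leg j) (spider_adj m) a F)"
proof (induction J rule: finite_induct)
  case (insert j J)
  have "colour_poly (leg j \<union> (\<Union>j\<in>J. leg j)) (spider_adj m) a F =
        colour_poly (leg j) (spider_adj m) a F * colour_poly (\<Union>j\<in>J. leg j) (spider_adj m) a F"
    using insert by (intro colour_poly_Un) (auto simp: leg_def spider_adj_simps)
  with insert show ?case
    by simp
qed (simp add: colour_poly_empty)

lemma colour_poly_spider:
  "colour_poly (spider_verts m) (spider_adj m) a (\<lambda>_. {}) =
   (\<Sum>T\<in>colour_choices (a Torso) {}. monom 1 (if 1 \<in> T then 1 else 0) *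
      (\<Prod>j\<in>{1..m}. leg_poly (a (Inner j)) (a (Outer j)) T))"
proof -
  have "colour_poly (spider_verts m) (spider_adj m) a (\<lambda>_. {}) =
        (\<Sum>T\<in>colour_choices (a Torso) {}. monom 1 (if 1 \<in> T then 1 else 0) *
           colour_poly (spider_verts m - {Torso}) (spider_adj m) a (forbid_at_nbrs (spider_adj m) Torso T (\<lambda>_. {})))"
    by (rule colour_poly_remove_vertex) (auto simp: finite_spider_verts spider_verts_def spider_adj_irrefl)
  also have "spider_verts m - {Torso} = (\<Union>j\<in>{1..m}. leg j)"
    by (auto simp: spider_verts_def leg_def)
  finally have "colour_poly (spider_verts m) (spider_adj m) a (\<lambda>_. {}) =
        (\<Sum>T\<in>colour_choices (a Torso) {}. monom 1 (if 1 \<in> T then 1 else 0) *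
           colour_poly (\<Union>j\<in>{1..m}. leg j) (spider_adj m) a (forbid_at_nbrs (spider_adj m) Torso T (\<lambda>_. {})))" .
  moreover have "colour_poly (\<Union>j\<in>{1..m}. leg j) (spider_adj m) a (forbid_at_nbrs (spider_adj m) Torso T (\<lambda>_. {})) =
             (\<Prod>j\<in>{1..m}. leg_poly (a (Inner j)) (a (Outer j)) T)" for T
    unfolding colour_poly_legs[OF finite_atLeastAtMost]
    by (intro prod.cong refl, subst colour_poly_leg) (simp_all add: forbid_at_nbrs_def spider_adj_simps)
  ultimately show ?thesis
    by simp
qed

lemma colour_poly_forest:
  "colour_poly (forest_verts p n) (forest_adj n) \<alpha> (\<lambda>_. {}) =
   (\<Prod>i<p. colour_poly (spider_verts (n i)) (spider_adj (n i)) (\<lambda>u. \<alpha> (i, u)) (\<lambda>_. {}))"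
proof (induction p)
  case 0
  have "forest_verts 0 n = {}"
    by (simp add: forest_verts_def)
  then show ?case
    by (simp add: colour_poly_empty)
next
  case (Suc p)
  have split: "forest_verts (Suc p) n = forest_verts p n \<union> Pair p ` spider_verts (n p)"
    by (auto simp: forest_verts_def less_Suc_eq)
  have "finite (forest_verts p n)"
    by (rule finite_subset[of _ "{..<p} \<times> \<Union>(spider_verts ` n ` {..<p})"])
       (auto simp: forest_verts_def finite_spider_verts)
  then have "colour_poly (forest_verts (Suc p) n) (forest_adj n) \<alpha> (\<lambda>_. {}) =
        colour_poly (forest_verts p n) (forest_adj n) \<alpha> (\<lambda>_. {}) *
        colour_poly (Pair p ` spider_verts (n p)) (forest_adj n) \<alpha> (\<lambda>_. {})"
    unfolding split by (intro colour_poly_Un) (auto simp: forest_verts_def forest_adj_def finite_spider_verts)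
  also have "colour_poly (Pair p ` spider_verts (n p)) (forest_adj n) \<alpha> (\<lambda>_. {}) =
             colour_poly (spider_verts (n p)) (spider_adj (n p)) (\<lambda>u. \<alpha> (p, u)) (\<lambda>_. {})"
    by (subst colour_poly_inj_image) (auto simp: forest_adj_def comp_def inj_on_def)
  finally show ?case
    using Suc by simp
qed

definition other_legs :: "nat \<Rightarrow> (spv \<Rightarrow> nat) \<Rightarrow> nat set" where
  "other_legs m a = {1..m} - spJ m a"

definition other_legs_poly :: "nat \<Rightarrow> (spv \<Rightarrow> nat) \<Rightarrow> int poly" where
  "other_legs_poly m a = (\<Prod>j\<in>other_legs m a. leg_poly (a (Inner j)) (a (Outer j)) {1})"

definition other_legs_mult :: "nat \<Rightarrow> (spv \<Rightarrow> nat) \<Rightarrow> int" where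
  "other_legs_mult m a = (\<Prod>j\<in>other_legs m a. if a (Inner j) = 1 then 2 else 1)"

definition other_legs_deg :: "nat \<Rightarrow> (spv \<Rightarrow> nat) \<Rightarrow> nat" where
  "other_legs_deg m a = (\<Sum>j\<in>other_legs m a. a (Inner j) + a (Outer j))"

lemma other_legs_mult_ge_1: "1 \<le> other_legs_mult m a"
  unfolding other_legs_mult_def by (rule prod_ge_1) auto

lemma spJ_subset: "spJ m a \<subseteq> {1..m}"
  by (auto simp: spJ_def)

lemma prod_legs_split: "(\<Prod>j\<in>{1..m}. g j) = (\<Prod>j\<in>other_legs m a. g j) * (\<Prod>j\<in>spJ m a. g j)"
  unfolding other_legs_def by (rule prod.subset_diff[OF spJ_subset]) simp

lemma sum_legs_split: "(\<Sum>j\<in>{1..m}. g j) = (\<Sum>j\<in>other_legs m a. g j) + (\<Sum>j\<in>spJ m a. g j)"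
  unfolding other_legs_def by (rule sum.subset_diff[OF spJ_subset]) simp

context
  fixes m k :: nat and a :: "spv \<Rightarrow> nat"
  assumes in_A: "in_A m k a"
begin

lemma finite_spJ: "finite (spJ m a)"
  using finite_subset[OF spJ_subset] by blast

lemma card_spJ: "card (spJ m a) = k"
  using in_A by (simp add: in_A_def)

lemma spJ_values: "j \<in> spJ m a \<Longrightarrow> a (Inner j) = 1 \<and> a (Outer j) = 0"
  by (simp add: spJ_def)

lemma leg_poly_spJ: "j \<in> spJ m a \<Longrightarrow> leg_poly (a (Inner j)) (a (Outer j)) T = leg_poly (Suc 0) 0 T"
  using spJ_values by simp

lemma other_leg_values:
  assumes "j \<in> other_legs m a"
  shows "a (Inner j) \<le> 1" and "a (Inner j) + a (Outer j) \<le> 2" and "\<not> (a (Inner j) = 1 \<and> a (Outer j) = 0)"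
  using in_A assms by (auto simp: in_A_def other_legs_def spJ_def)

lemma sym_unimodal_other_legs_poly: "sym_unimodal (other_legs_deg m a) (other_legs_poly m a)"
  unfolding other_legs_poly_def other_legs_deg_def
proof (rule sym_unimodal_prod)
  show "finite (other_legs m a)"
    by (simp add: other_legs_def)
  fix j assume j: "j \<in> other_legs m a"
  show "sym_unimodal (a (Inner j) + a (Outer j)) (leg_poly (a (Inner j)) (a (Outer j)) {1})"
    by (rule leg_poly_other(3)[OF other_leg_values[OF j]])
qed

lemma colour_poly_spider_A:
  assumes "1 \<le> k"
  shows "colour_poly (spider_verts m) (spider_adj m) a (\<lambda>_. {}) =
         other_legs_poly m a * (monom 1 1 * (1 + monom 1 (k - 1)))"
proof -
  have "colour_choices 1 {} = {{1}, {2}}"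
    by (simp add: colour_choices_eq_filter)
  moreover have "a Torso = 1"
    using in_A by (simp add: in_A_def)
  moreover have "(\<Prod>j\<in>{1..m}. leg_poly (a (Inner j)) (a (Outer j)) {1}) = other_legs_poly m a"
    unfolding prod_legs_split[where m = m and a = a] other_legs_poly_def by (simp add: leg_poly_spJ leg_poly_1_0)
  moreover have "(\<Prod>j\<in>{1..m}. leg_poly (a (Inner j)) (a (Outer j)) {2}) = other_legs_poly m a * monom 1 k"
    unfolding prod_legs_split[where m = m and a = a] other_legs_poly_def using leg_poly_other(1)[OF other_leg_values]
    by (simp add: leg_poly_spJ leg_poly_1_0 card_spJ monom_power)
  moreover have "monom 1 1 * monom (1::int) (k - 1) = monom 1 k"
    using assms by (simp add: mult_monom)
  ultimately show ?thesis
    by (simp add: colour_poly_spider algebra_simps)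
qed

lemma sum_spider_A: "(\<Sum>u\<in>spider_verts m. a u) = 1 + k + other_legs_deg m a"
proof -
  have "(\<Sum>j\<in>spJ m a. a (Inner j) + a (Outer j)) = k"
    using spJ_values card_spJ by simp
  moreover have "a Torso = 1"
    using in_A by (simp add: in_A_def)
  ultimately show ?thesis
    unfolding sum_spider_verts sum_legs_split[where m = m and a = a] other_legs_deg_def by simp
qed

lemma phi_apply:
  assumes "1 \<le> ai" and "ai \<le> k"
  obtains i where "i \<in> spJ m a" and "phi m ai a Torso = 0" and "\<And>j. phi m ai a (Outer j) = a (Outer j)"
    and "\<And>j. phi m ai a (Inner j) = (if j = i then 2 else a (Inner j))"
proof
  let ?i = "sorted_list_of_set (spJ m a) ! (ai - 1)"
  have "ai - 1 < length (sorted_list_of_set (spJ m a))"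
    using assms card_spJ finite_spJ by simp
  then show "?i \<in> spJ m a"
    using finite_spJ by (metis nth_mem set_sorted_list_of_set)
  have "{ai} \<inter> {1..card (spJ m a)} = {ai}"
    using assms card_spJ by auto
  then show "phi m ai a (Inner j) = (if j = ?i then 2 else a (Inner j))" for j
    by (simp add: phi_def phiS_def)
qed (simp_all add: phi_def phiS_def)

lemma
  assumes "1 \<le> ai" and "ai \<le> k"
  shows colour_poly_spider_phi: "colour_poly (spider_verts m) (spider_adj m) (phi m ai a) (\<lambda>_. {}) =
           smult (other_legs_mult m a) (other_legs_poly m a * (monom 1 1 * [:1, 1:] ^ (k - 1)))"
    and sum_spider_phi: "(\<Sum>u\<in>spider_verts m. phi m ai a u) = (\<Sum>u\<in>spider_verts m. a u)"
proof -
  obtain i where i: "i \<in> spJ m a" and T: "phi m ai a Torso = 0"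
    and O: "\<And>j. phi m ai a (Outer j) = a (Outer j)" and I: "\<And>j. phi m ai a (Inner j) = (if j = i then 2 else a (Inner j))"
    using phi_apply[OF assms] by blast
  have other: "j \<noteq> i" if "j \<in> other_legs m a" for j
    using that i by (auto simp: other_legs_def)
  have "(\<Prod>j\<in>other_legs m a. leg_poly (phi m ai a (Inner j)) (phi m ai a (Outer j)) {}) =
        smult (other_legs_mult m a) (other_legs_poly m a)"
    using other leg_poly_other(2)[OF other_leg_values]
    by (simp add: I O other_legs_mult_def other_legs_poly_def prod_smult[symmetric] cong: prod.cong)
  moreover have "(\<Prod>j\<in>spJ m a. leg_poly (phi m ai a (Inner j)) (phi m ai a (Outer j)) {}) =
                 monom 1 1 * [:1, 1:] ^ (k - 1)"
  proof -
    have "(\<Prod>j\<in>spJ m a - {i}. leg_poly (phi m ai a (Inner j)) (phi m ai a (Outer j)) {}) = [:1, 1:] ^ (k - 1)"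
      using card_spJ finite_spJ i by (simp add: I O leg_poly_spJ leg_poly_1_0)
    then show ?thesis
      using spJ_values[OF i] by (simp add: prod.remove[OF finite_spJ i] I O leg_poly_2_0)
  qed
  moreover have "colour_choices 0 {} = {{}}"
    by (simp add: colour_choices_eq_filter)
  ultimately show "colour_poly (spider_verts m) (spider_adj m) (phi m ai a) (\<lambda>_. {}) =
           smult (other_legs_mult m a) (other_legs_poly m a * (monom 1 1 * [:1, 1:] ^ (k - 1)))"
    unfolding colour_poly_spider T prod_legs_split[where m = m and a = a] by simp
  have "(\<Sum>j\<in>spJ m a. phi m ai a (Inner j) + phi m ai a (Outer j)) = 1 + (\<Sum>j\<in>spJ m a. a (Inner j) + a (Outer j))"
    using spJ_values[OF i] by (simp add: sum.remove[OF finite_spJ i] I O)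
  moreover have "(\<Sum>j\<in>other_legs m a. phi m ai a (Inner j) + phi m ai a (Outer j)) =
                 (\<Sum>j\<in>other_legs m a. a (Inner j) + a (Outer j))"
    using other by (simp add: I O)
  moreover have "a Torso = 1"
    using in_A by (simp add: in_A_def)
  ultimately show "(\<Sum>u\<in>spider_verts m. phi m ai a u) = (\<Sum>u\<in>spider_verts m. a u)"
    unfolding sum_spider_verts sum_legs_split[where m = m and a = a] T by simp
qed

end

lemma finite_forest_verts: "finite (forest_verts p n)"
  by (rule finite_subset[of _ "{..<p} \<times> \<Union>(spider_verts ` n ` {..<p})"])
     (auto simp: forest_verts_def finite_spider_verts)

lemma sum_forest_verts: "(\<Sum>v\<in>forest_verts p n. f v) = (\<Sum>i<p. \<Sum>u\<in>spider_verts (n i). f (i, u))"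
proof -
  have "forest_verts p n = Sigma {..<p} (\<lambda>i. spider_verts (n i))"
    by (auto simp: forest_verts_def)
  then show ?thesis
    by (simp add: sum.Sigma finite_spider_verts)
qed

context
  fixes p :: nat and n k a :: "nat \<Rightarrow> nat" and \<alpha> \<beta> :: "nat \<times> spv \<Rightarrow> nat"
  assumes hA: "\<forall>i<p. in_A (n i) (k i) (\<lambda>u. \<alpha> (i, u))"
    and hk: "\<forall>i<p. 3 \<le> k i"
    and ha: "\<forall>i<p. 1 \<le> a i \<and> a i \<le> k i"
    and hbeta: "\<forall>i<p. \<forall>u. \<beta> (i, u) = phi (n i) (a i) (\<lambda>u. \<alpha> (i, u)) u"
begin

lemma forest_component:
  assumes "i \<in> {..<p}"
  shows "in_A (n i) (k i) (\<lambda>u. \<alpha> (i, u))" and "1 \<le> k i" and "1 \<le> a i" and "a i \<le> k i"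
    and "(\<lambda>u. \<beta> (i, u)) = phi (n i) (a i) (\<lambda>u. \<alpha> (i, u))"
  using assms hA hk ha hbeta by fastforce+

lemma colour_poly_forest_A:
  "colour_poly (forest_verts p n) (forest_adj n) \<alpha> (\<lambda>_. {}) =
   (\<Prod>i<p. other_legs_poly (n i) (\<lambda>u. \<alpha> (i, u)) * (monom 1 1 * (1 + monom 1 (k i - 1))))"
  unfolding colour_poly_forest
  by (rule prod.cong[OF refl], rule colour_poly_spider_A[OF forest_component(1,2)])

lemma colour_poly_forest_phi:
  "colour_poly (forest_verts p n) (forest_adj n) \<beta> (\<lambda>_. {}) =
   (\<Prod>i<p. smult (other_legs_mult (n i) (\<lambda>u. \<alpha> (i, u)))
              (other_legs_poly (n i) (\<lambda>u. \<alpha> (i, u)) * (monom 1 1 * [:1, 1:] ^ (k i - 1))))"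
  unfolding colour_poly_forest
  by (rule prod.cong[OF refl], simp only: forest_component(5) colour_poly_spider_phi[OF forest_component(1,3,4)])

lemma sum_forest_A:
  "(\<Sum>v\<in>forest_verts p n. \<alpha> v) = (\<Sum>i<p. other_legs_deg (n i) (\<lambda>u. \<alpha> (i, u))) + (\<Sum>i<p. (k i - 1) + 2)"
proof -
  have "(\<Sum>v\<in>forest_verts p n. \<alpha> v) = (\<Sum>i<p. other_legs_deg (n i) (\<lambda>u. \<alpha> (i, u)) + ((k i - 1) + 2))"
    unfolding sum_forest_verts
  proof (rule sum.cong[OF refl])
    fix i assume i: "i \<in> {..<p}"
    show "(\<Sum>u\<in>spider_verts (n i). \<alpha> (i, u)) = other_legs_deg (n i) (\<lambda>u. \<alpha> (i, u)) + ((k i - 1) + 2)"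
      using sum_spider_A[OF forest_component(1)[OF i]] forest_component(2)[OF i] by simp
  qed
  then show ?thesis
    by (simp only: sum.distrib)
qed

lemma sum_forest_phi: "(\<Sum>v\<in>forest_verts p n. \<beta> v) = (\<Sum>v\<in>forest_verts p n. \<alpha> v)"
  unfolding sum_forest_verts
  by (rule sum.cong[OF refl], simp only: forest_component(5) sum_spider_phi[OF forest_component(1,3,4)])

lemma sym_unimodal_forest_colour_poly:
  "sym_unimodal (\<Sum>v\<in>forest_verts p n. \<alpha> v)
     (colour_poly (forest_verts p n) (forest_adj n) \<alpha> (\<lambda>_. {}) + colour_poly (forest_verts p n) (forest_adj n) \<beta> (\<lambda>_. {}))"
proof -
  define P where "P i = other_legs_poly (n i) (\<lambda>u. \<alpha> (i, u))" for i
  define C where "C i = other_legs_mult (n i) (\<lambda>u. \<alpha> (i, u))" for i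
  define d where "d i = other_legs_deg (n i) (\<lambda>u. \<alpha> (i, u))" for i
  have "colour_poly (forest_verts p n) (forest_adj n) \<alpha> (\<lambda>_. {}) + colour_poly (forest_verts p n) (forest_adj n) \<beta> (\<lambda>_. {}) =
        (\<Prod>i<p. P i) * ((\<Prod>i<p. monom 1 1 * (1 + monom 1 (k i - 1))) +
                        smult (\<Prod>i<p. C i) (\<Prod>i<p. monom 1 1 * [:1, 1:] ^ (k i - 1)))"
    unfolding colour_poly_forest_A colour_poly_forest_phi P_def C_def
    by (simp only: prod.distrib prod_smult) (simp only: distrib_left mult_smult_right)
  moreover have "sym_unimodal ((\<Sum>i<p. d i) + (\<Sum>i<p. (k i - 1) + 2)) \<dots>"
  proof (rule sym_unimodal_mult)
    show "sym_unimodal (\<Sum>i<p. d i) (\<Prod>i<p. P i)"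
      unfolding P_def d_def by (rule sym_unimodal_prod, simp, rule sym_unimodal_other_legs_poly[OF forest_component(1)])
    show "sym_unimodal (\<Sum>i<p. k i - 1 + 2) ((\<Prod>i<p. monom 1 1 * (1 + monom 1 (k i - 1))) +
            smult (\<Prod>i<p. C i) (\<Prod>i<p. monom 1 1 * [:1, 1:] ^ (k i - 1)))"
      using hk by (intro sym_unimodal_spider_combination prod_ge_1) (auto simp: C_def other_legs_mult_ge_1)
  qed
  ultimately show ?thesis
    unfolding sum_forest_A d_def by (simp only:)
qed

end

lemma sym_unimodal_coeff_Suc_le:
  assumes Q: "sym_unimodal D Q" and "x + y = D" and "1 \<le> y" and "y \<le> x"
  shows "coeff Q (Suc x) \<le> coeff Q x"
proof -
  have palin: "coeff Q (D - j) = coeff Q j" if "j \<le> D" for j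
    using Q that by (simp add: sym_unimodal_def)
  have "y - 1 \<le> D" "D - (y - 1) = Suc x" "x \<le> D" "D - x = y"
    using assms(2-) by arith+
  then have "coeff Q (Suc x) = coeff Q (y - 1)"
    using palin[of "y - 1"] by simp
  also have "\<dots> \<le> coeff Q y"
    using Q assms(2-) by (auto simp: sym_unimodal_def elim!: allE[of _ "y - 1"])
  also have "coeff Q y = coeff Q x"
    using palin[of x] \<open>x \<le> D\<close> \<open>D - x = y\<close> by simp
  finally show ?thesis .
qed

text \<open>The coefficient of \<open>s\<^sub>(\<^sub>x\<^sub>,\<^sub>y\<^sub>)\<close> is \<open>f(x\<^sub>1^x x\<^sub>2^y) - f(x\<^sub>1^(x+1) x\<^sub>2^(y-1))\<close>, here
  \<open>[t^x] Q - [t^(x+1)] Q\<close> with \<open>x \<ge> D/2\<close>, where the symmetric unimodal \<open>Q\<close> decreases.\<close>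

lemma ge_2s_if_sym_unimodal_two_rows:
  assumes f: "symmetric_coeffs f" and nonneg: "\<And>e. 0 \<le> f e" and Q: "sym_unimodal D Q"
    and two_rows: "\<And>x y. f (partition_exp [x, y]) = (if x + y = D then coeff Q x else 0)"
  shows "ge_2s f"
  unfolding ge_2s_def
proof (intro exI conjI allI impI)
  show "schur_expansion f (schur_coeff f)"
    by (rule schur_expansion_schur_coeff[OF f])
  fix la assume la: "is_partition la \<and> length la \<le> 2"
  show "0 \<le> schur_coeff f la"
  proof (cases "length la < 2")
    case True
    then have "partition_n la = 0"
      by (auto simp: partition_n_def less_2_cases_iff)
    then show ?thesis
      using nonneg by (simp add: schur_coeff_partition_n_0)
  next
    case False
    then obtain x y where la_xy: "la = [x, y]"
      using la by (auto simp: numeral_2_eq_2 length_Suc_conv)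
    then have "1 \<le> y" and "y \<le> x"
      using la by (auto simp: is_partition_def)
    then have "f (partition_exp [Suc x, y - 1]) \<le> f (partition_exp [x, y])"
      using sym_unimodal_coeff_Suc_le[OF Q] by (simp add: two_rows)
    then show ?thesis
      unfolding la_xy using schur_coeff_two_rows[OF f \<open>1 \<le> y\<close> \<open>y \<le> x\<close>] by simp
  qed
qed

theorem mainTheorem12:
  fixes p :: nat and n k a :: "nat \<Rightarrow> nat"
    and \<alpha> \<beta> :: "nat \<times> spv \<Rightarrow> nat"
  assumes hA: "\<forall>i<p. in_A (n i) (k i) (\<lambda>u. \<alpha> (i, u))"
    and hk: "\<forall>i<p. 3 \<le> k i"
    and ha: "\<forall>i<p. 1 \<le> a i \<and> a i \<le> k i"
    and hbeta: "\<forall>i<p. \<forall>u. \<beta> (i, u) = phi (n i) (a i) (\<lambda>u. \<alpha> (i, u)) u"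
  shows "ge_2s (\<lambda>e. Xcoef (forest_verts p n) (forest_adj n) \<alpha> e
                   + Xcoef (forest_verts p n) (forest_adj n) \<beta> e)"
proof (rule ge_2s_if_sym_unimodal_two_rows)
  show "symmetric_coeffs (\<lambda>e. Xcoef (forest_verts p n) (forest_adj n) \<alpha> e + Xcoef (forest_verts p n) (forest_adj n) \<beta> e)"
    by (intro symmetric_coeffs_add symmetric_coeffs_Xcoef)
  show "0 \<le> Xcoef (forest_verts p n) (forest_adj n) \<alpha> e + Xcoef (forest_verts p n) (forest_adj n) \<beta> e" for e
    by (simp add: Xcoef_def)
  show "sym_unimodal (\<Sum>v\<in>forest_verts p n. \<alpha> v)
          (colour_poly (forest_verts p n) (forest_adj n) \<alpha> (\<lambda>_. {}) +
           colour_poly (forest_verts p n) (forest_adj n) \<beta> (\<lambda>_. {}))"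
    by (rule sym_unimodal_forest_colour_poly[OF hA hk ha hbeta])
  show "Xcoef (forest_verts p n) (forest_adj n) \<alpha> (partition_exp [x, y]) +
        Xcoef (forest_verts p n) (forest_adj n) \<beta> (partition_exp [x, y]) =
        (if x + y = (\<Sum>v\<in>forest_verts p n. \<alpha> v)
         then coeff (colour_poly (forest_verts p n) (forest_adj n) \<alpha> (\<lambda>_. {}) +
                     colour_poly (forest_verts p n) (forest_adj n) \<beta> (\<lambda>_. {})) x
         else 0)" for x y
    using sum_forest_phi[OF hA hk ha hbeta] by (simp add: Xcoef_two_rows finite_forest_verts)
qed

end
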